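(* Let $n\ge1$, $d\ge1$ be integers, let $p:\mathbb{R}^3\to\mathbb{C}$ be a homogeneous quadratic polynomial with $\tau(p)=0$ and $\kappa(p,p)=0$ (Euclidean Laplacian and conformality operator on $\mathbb{R}^3$), and let $P_d,Q_d:\mathbb{C}^n\to\mathbb{C}$ be linearly independent homogeneous holomorphic polynomials of degree $d$. On the Minkowski space $\mathbb{R}^{2n+3}_1$ with coordinates $(x_1,\dots,x_{2n+3})$ set $$z_1=x_4+ix_5,\ \dots,\ z_{n-1}=x_{2n}+ix_{2n+1},\ z_n=x_{2n+2}-x_{2n+3},$$ and define $$\hat\Phi^*_d(x)=\frac{p(x_1,x_2,x_3)^{d/2}+P_d(z_1,\dots,z_n)}{Q_d(z_1,\dots,z_n)}$$ on the open subset $V$ of $U^{2n+3}=\{x\in\mathbb{R}^{2n+3}_1:\langle x,x\rangle_L<0\}$ where $Q_d(z)\ne0$ (and, for $d$ odd, $p(x)\notin(-\infty,0]$, using the principal square root). Then $\hat\Phi^*_d$ is a harmonic morphism on $V$ with respect to the Lorentzian metric, it is invariant under $x\mapsto\lambda x$, $\lambda>0$, and the induced function $\Phi^*_d$ on $\pi^*(V)\subset H^{2n+2}$ (with $\Phi^*_d\circ\pi^*=\hat\Phi^*_d$, $\pi^*(x)=x/\sqrt{-\langle x,x\rangle_L}$) is a harmonic morphism on the hyperbolic space $H^{2n+2}$. Moreover, if $d$ is even and $Q_d(z)=z_n^d=(x_{2n+2}-x_{2n+3})^d$, then $Q_d$ has no zeros on $U^{2n+3}$, so $\hat\Phi^*_d$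 is defined on all of $U^{2n+3}$ and $\Phi^*_d$ on all of $H^{2n+2}$.
   Context: $\mathbb{R}^{m}_1$ is $\mathbb{R}^m$ with the Lorentzian metric $\langle x,y\rangle_L=-x_my_m+\sum_{k=1}^{m-1}x_ky_k$. For complex-valued functions on $\mathbb{R}^m_1$: $\tau(\phi)=-\partial^2\phi/\partial x_m^2+\sum_{k<m}\partial^2\phi/\partial x_k^2$ and $\kappa(\phi,\psi)=-\partial_m\phi\,\partial_m\psi+\sum_{k<m}\partial_k\phi\,\partial_k\psi$. $H^{2n+2}=\{x\in\mathbb{R}^{2n+3}_1:\langle x,x\rangle_L=-1\}$ with the induced (Riemannian) metric. A map $\phi$ from a semi-Riemannian manifold to $\mathbb{C}$ is a harmonic morphism if it pulls back local harmonic functions to harmonic functions; equivalently $\tau(\phi)=0$ and $\kappa(\phi,\phi)=0$ for the relevant metric. *)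

theory Defs
  imports "HOL-Analysis.Analysis"
begin

text \<open>Points of R^m are represented as functions nat => real, coordinates x 1, ..., x m
  (1-based as in the paper), all other coordinates being 0. Functions on R^m are
  complex-valued functions of such points.\<close>

definition supp_in :: "nat \<Rightarrow> (nat \<Rightarrow> real) \<Rightarrow> bool" where
  "supp_in m x \<longleftrightarrow> (\<forall>k. k \<notin> {1..m} \<longrightarrow> x k = 0)"

definition pd :: "nat \<Rightarrow> ((nat \<Rightarrow> real) \<Rightarrow> complex) \<Rightarrow> (nat \<Rightarrow> real) \<Rightarrow> complex" where
  "pd k f x = vector_derivative (\<lambda>t. f (x(k := t))) (at (x k))"

definition has_pd :: "nat \<Rightarrow> ((nat \<Rightarrow> real) \<Rightarrow> complex) \<Rightarrow> (nat \<Rightarrow> real) \<Rightarrow> bool" where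
  "has_pd k f x \<longleftrightarrow> (\<lambda>t. f (x(k := t))) differentiable (at (x k))"

definition twice_pd :: "nat \<Rightarrow> ((nat \<Rightarrow> real) \<Rightarrow> complex) \<Rightarrow> (nat \<Rightarrow> real) \<Rightarrow> bool" where
  "twice_pd m f x \<longleftrightarrow> (\<forall>k\<in>{1..m}. has_pd k f x \<and> (\<forall>j\<in>{1..m}. has_pd j (pd k f) x))"

definition lor :: "nat \<Rightarrow> (nat \<Rightarrow> real) \<Rightarrow> (nat \<Rightarrow> real) \<Rightarrow> real" where
  "lor m x y = - x m * y m + (\<Sum>k=1..m-1. x k * y k)"

definition tauL :: "nat \<Rightarrow> ((nat \<Rightarrow> real) \<Rightarrow> complex) \<Rightarrow> (nat \<Rightarrow> real) \<Rightarrow> complex" where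
  "tauL m f x = - pd m (pd m f) x + (\<Sum>k=1..m-1. pd k (pd k f) x)"

definition kappaL :: "nat \<Rightarrow> ((nat \<Rightarrow> real) \<Rightarrow> complex) \<Rightarrow> ((nat \<Rightarrow> real) \<Rightarrow> complex) \<Rightarrow> (nat \<Rightarrow> real) \<Rightarrow> complex" where
  "kappaL m f g x = - pd m f x * pd m g x + (\<Sum>k=1..m-1. pd k f x * pd k g x)"

definition tauE :: "nat \<Rightarrow> ((nat \<Rightarrow> real) \<Rightarrow> complex) \<Rightarrow> (nat \<Rightarrow> real) \<Rightarrow> complex" where
  "tauE m f x = (\<Sum>k=1..m. pd k (pd k f) x)"

definition kappaE :: "nat \<Rightarrow> ((nat \<Rightarrow> real) \<Rightarrow> complex) \<Rightarrow> ((nat \<Rightarrow> real) \<Rightarrow> complex) \<Rightarrow> (nat \<Rightarrow> real) \<Rightarrow> complex" where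
  "kappaE m f g x = (\<Sum>k=1..m. pd k f x * pd k g x)"

definition harmonic_morphism_L :: "nat \<Rightarrow> (nat \<Rightarrow> real) set \<Rightarrow> ((nat \<Rightarrow> real) \<Rightarrow> complex) \<Rightarrow> bool" where
  "harmonic_morphism_L m V f \<longleftrightarrow>
     (\<forall>x\<in>V. twice_pd m f x \<and> tauL m f x = 0 \<and> kappaL m f f x = 0)"

definition Uset :: "nat \<Rightarrow> (nat \<Rightarrow> real) set" where
  "Uset m = {x. supp_in m x \<and> lor m x x < 0}"

definition Hset :: "nat \<Rightarrow> (nat \<Rightarrow> real) set" where
  "Hset m = {x. supp_in m x \<and> lor m x x = -1}"

definition pistar :: "nat \<Rightarrow> (nat \<Rightarrow> real) \<Rightarrow> (nat \<Rightarrow> real)" where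
  "pistar m x = (\<lambda>k. x k / sqrt (- lor m x x))"

text \<open>Charts of the hyperboloid H^N in R^{N+1}_1 (two sheets, s = 1 or s = -1):
  y = (y_1..y_N) |-> (y_1, ..., y_N, s * sqrt(1 + |y|^2)).\<close>
definition hchart :: "nat \<Rightarrow> real \<Rightarrow> (nat \<Rightarrow> real) \<Rightarrow> (nat \<Rightarrow> real)" where
  "hchart N s y = (\<lambda>k. if k \<in> {1..N} then y k
                       else if k = N + 1 then s * sqrt (1 + (\<Sum>i=1..N. (y i)\<^sup>2)) else 0)"

definition hmetric :: "nat \<Rightarrow> (nat \<Rightarrow> real) \<Rightarrow> nat \<Rightarrow> nat \<Rightarrow> real" where
  "hmetric N y i j = (if i = j then 1 else 0) - y i * y j / (1 + (\<Sum>l=1..N. (y l)\<^sup>2))"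

definition hmetric_inv :: "nat \<Rightarrow> (nat \<Rightarrow> real) \<Rightarrow> nat \<Rightarrow> nat \<Rightarrow> real" where
  "hmetric_inv N y i j = (if i = j then 1 else 0) + y i * y j"

definition hsqrtdet :: "nat \<Rightarrow> (nat \<Rightarrow> real) \<Rightarrow> real" where
  "hsqrtdet N y = 1 / sqrt (1 + (\<Sum>l=1..N. (y l)\<^sup>2))"

definition tauH :: "nat \<Rightarrow> ((nat \<Rightarrow> real) \<Rightarrow> complex) \<Rightarrow> (nat \<Rightarrow> real) \<Rightarrow> complex" where
  "tauH N f y = (1 / complex_of_real (hsqrtdet N y)) *
     (\<Sum>i=1..N. pd i (\<lambda>w. complex_of_real (hsqrtdet N w) *
                          (\<Sum>j=1..N. complex_of_real (hmetric_inv N w i j) * pd j f w)) y)"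

definition kappaH :: "nat \<Rightarrow> ((nat \<Rightarrow> real) \<Rightarrow> complex) \<Rightarrow> ((nat \<Rightarrow> real) \<Rightarrow> complex) \<Rightarrow> (nat \<Rightarrow> real) \<Rightarrow> complex" where
  "kappaH N f g y = (\<Sum>i=1..N. \<Sum>j=1..N. complex_of_real (hmetric_inv N y i j) * pd i f y * pd j g y)"

definition harmonic_morphism_H :: "nat \<Rightarrow> (nat \<Rightarrow> real) set \<Rightarrow> ((nat \<Rightarrow> real) \<Rightarrow> complex) \<Rightarrow> bool" where
  "harmonic_morphism_H N W f \<longleftrightarrow>
     (\<forall>s\<in>{1, -1}. \<forall>y. supp_in N y \<and> hchart N s y \<in> W \<longrightarrow>
        twice_pd N (f \<circ> hchart N s) y \<and> tauH N (f \<circ> hchart N s) y = 0 \<and>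
        kappaH N (f \<circ> hchart N s) (f \<circ> hchart N s) y = 0)"

definition quad3 :: "(nat \<Rightarrow> nat \<Rightarrow> complex) \<Rightarrow> (nat \<Rightarrow> real) \<Rightarrow> complex" where
  "quad3 a x = (\<Sum>i=1..3. \<Sum>j=1..3. a i j * complex_of_real (x i) * complex_of_real (x j))"

definition exps :: "nat \<Rightarrow> nat \<Rightarrow> (nat \<Rightarrow> nat) set" where
  "exps n d = {\<alpha>. (\<forall>k. k \<notin> {1..n} \<longrightarrow> \<alpha> k = 0) \<and> (\<Sum>k=1..n. \<alpha> k) = d}"

definition hpoly :: "nat \<Rightarrow> nat \<Rightarrow> ((nat \<Rightarrow> nat) \<Rightarrow> complex) \<Rightarrow> (nat \<Rightarrow> complex) \<Rightarrow> complex" where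
  "hpoly n d c z = (\<Sum>\<alpha>\<in>exps n d. c \<alpha> * (\<Prod>k=1..n. z k ^ \<alpha> k))"

definition zmap :: "nat \<Rightarrow> (nat \<Rightarrow> real) \<Rightarrow> (nat \<Rightarrow> complex)" where
  "zmap n x = (\<lambda>k. if 1 \<le> k \<and> k \<le> n - 1 then Complex (x (2*k+2)) (x (2*k+3))
                   else if k = n then complex_of_real (x (2*n+2) - x (2*n+3)) else 0)"

definition half_pow :: "complex \<Rightarrow> nat \<Rightarrow> complex" where
  "half_pow w d = (if even d then w ^ (d div 2) else (csqrt w) ^ d)"

definition PhiHat :: "nat \<Rightarrow> nat \<Rightarrow> (nat \<Rightarrow> nat \<Rightarrow> complex) \<Rightarrow> ((nat \<Rightarrow> nat) \<Rightarrow> complex)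
                       \<Rightarrow> ((nat \<Rightarrow> nat) \<Rightarrow> complex) \<Rightarrow> (nat \<Rightarrow> real) \<Rightarrow> complex" where
  "PhiHat n d a cP cQ x =
     (half_pow (quad3 a x) d + hpoly n d cP (zmap n x)) / hpoly n d cQ (zmap n x)"

definition Vset :: "nat \<Rightarrow> nat \<Rightarrow> (nat \<Rightarrow> nat \<Rightarrow> complex) \<Rightarrow> ((nat \<Rightarrow> nat) \<Rightarrow> complex)
                      \<Rightarrow> (nat \<Rightarrow> real) set" where
  "Vset n d a cQ = {x \<in> Uset (2*n+3). hpoly n d cQ (zmap n x) \<noteq> 0 \<and>
       (odd d \<longrightarrow> quad3 a x \<notin> complex_of_real ` {t. t \<le> 0})}"

end

theory Submission
  imports Defs
begin

text \<open>Write \<open>\<Phi> = B R + G\<close> with \<open>B = p\<^bsup>d/2\<^esup>\<close>, \<open>R = 1/Q\<^sub>d(z)\<close> and \<open>G = P\<^sub>d(z)/Q\<^sub>d(z)\<close>.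
  \<open>B\<close> depends only on \<open>x\<^sub>1, x\<^sub>2, x\<^sub>3\<close> and is a harmonic morphism there, being a holomorphic
  function of the harmonic morphism \<open>p\<close>. The gradient and the Hessian rows of a holomorphic function
  of \<open>z\<close> lie in the span of the differentials \<open>dz\<^sub>l\<close>, which are isotropic and mutually orthogonal
  for the complex-bilinear Lorentzian form, and orthogonal to \<open>dx\<^sub>1, dx\<^sub>2, dx\<^sub>3\<close>. Expanding
  \<open>\<kappa>(\<Phi>, \<Phi>)\<close> and \<open>\<tau>(\<Phi>)\<close> by the product rule, every term vanishes.

  \<open>\<Phi>\<close> is homogeneous of degree 0, which gives the Euler relations \<open>\<Sum> x\<^sub>l \<partial>\<^sub>l\<Phi> = 0\<close> and
  \<open>\<Sum> x\<^sub>l \<partial>\<^sub>l\<partial>\<^sub>k\<Phi> = -\<partial>\<^sub>k\<Phi>\<close>. In the graph charts of the two sheets of the hyperboloid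
  they turn the Laplace-Beltrami and conformality operators of the restriction of \<open>\<Phi>\<close> into
  \<open>\<tau>(\<Phi>)\<close> and \<open>\<kappa>(\<Phi>, \<Phi>)\<close>, so the restriction is a harmonic morphism as well.\<close>

section \<open>Differentiation along curves\<close>

definition curve_deriv :: "nat \<Rightarrow> (real \<Rightarrow> nat \<Rightarrow> real) \<Rightarrow> (nat \<Rightarrow> real) \<Rightarrow> real \<Rightarrow> bool" where
  "curve_deriv m \<gamma> \<gamma>' t \<longleftrightarrow> (\<forall>k\<in>{1..m}. ((\<lambda>s. \<gamma> s k) has_real_derivative \<gamma>' k) (at t))"

text \<open>Points of \<open>\<real>\<^sup>m\<close> are functions \<open>nat \<Rightarrow> real\<close>, which carry no normed-space structure; so
  differentiability with gradient \<open>D\<close> is expressed by the chain rule along all curves through \<open>x\<close>.\<close>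
definition has_curve_gradient ::
    "nat \<Rightarrow> ((nat \<Rightarrow> real) \<Rightarrow> complex) \<Rightarrow> (nat \<Rightarrow> complex) \<Rightarrow> (nat \<Rightarrow> real) \<Rightarrow> bool" where
  "has_curve_gradient m f D x \<longleftrightarrow> (\<forall>\<gamma> \<gamma>' t. curve_deriv m \<gamma> \<gamma>' t \<longrightarrow> \<gamma> t = x \<longrightarrow>
     ((\<lambda>s. f (\<gamma> s)) has_vector_derivative (\<Sum>k=1..m. D k * complex_of_real (\<gamma>' k))) (at t))"

lemma has_curve_gradient_cong: "has_curve_gradient m f D x \<Longrightarrow> (\<And>k. D k = D' k) \<Longrightarrow> has_curve_gradient m f D' x"
  by (metis ext)

lemma has_curve_gradient_const: "has_curve_gradient m (\<lambda>x. c) (\<lambda>k. 0) x"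
  by (simp add: has_curve_gradient_def)

lemma has_curve_gradient_coord:
  assumes "k \<in> {1..m}"
  shows "has_curve_gradient m (\<lambda>x. complex_of_real (x k)) (\<lambda>j. if j = k then 1 else 0) x"
  unfolding has_curve_gradient_def
proof (intro allI impI)
  fix \<gamma> \<gamma>' t assume "curve_deriv m \<gamma> \<gamma>' t"
  then have "((\<lambda>s. \<gamma> s k) has_real_derivative \<gamma>' k) (at t)"
    using assms by (auto simp: curve_deriv_def)
  then have "((\<lambda>s. complex_of_real (\<gamma> s k)) has_vector_derivative of_real (\<gamma>' k)) (at t)"
    by (rule has_vector_derivative_of_real)
  then show "((\<lambda>s. complex_of_real (\<gamma> s k)) has_vector_derivative
      (\<Sum>j=1..m. (if j = k then 1 else 0) * complex_of_real (\<gamma>' j))) (at t)"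
    using assms by (simp add: mult_if_delta)
qed

lemma has_curve_gradient_add:
  "has_curve_gradient m f Df x \<Longrightarrow> has_curve_gradient m g Dg x \<Longrightarrow>
   has_curve_gradient m (\<lambda>x. f x + g x) (\<lambda>k. Df k + Dg k) x"
  unfolding has_curve_gradient_def
  by (auto simp: distrib_right sum.distrib intro!: has_vector_derivative_add)

lemma has_curve_gradient_mult:
  "has_curve_gradient m f Df x \<Longrightarrow> has_curve_gradient m g Dg x \<Longrightarrow>
   has_curve_gradient m (\<lambda>x. f x * g x) (\<lambda>k. Df k * g x + f x * Dg k) x"
  unfolding has_curve_gradient_def
proof (intro allI impI)
  fix \<gamma> \<gamma>' t
  assume f: "\<forall>\<gamma> \<gamma>' t. curve_deriv m \<gamma> \<gamma>' t \<longrightarrow> \<gamma> t = x \<longrightarrow>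
      ((\<lambda>s. f (\<gamma> s)) has_vector_derivative (\<Sum>k=1..m. Df k * complex_of_real (\<gamma>' k))) (at t)"
    and g: "\<forall>\<gamma> \<gamma>' t. curve_deriv m \<gamma> \<gamma>' t \<longrightarrow> \<gamma> t = x \<longrightarrow>
      ((\<lambda>s. g (\<gamma> s)) has_vector_derivative (\<Sum>k=1..m. Dg k * complex_of_real (\<gamma>' k))) (at t)"
    and \<gamma>: "curve_deriv m \<gamma> \<gamma>' t" "\<gamma> t = x"
  have "((\<lambda>s. f (\<gamma> s) * g (\<gamma> s)) has_vector_derivative
      f x * (\<Sum>k=1..m. Dg k * complex_of_real (\<gamma>' k)) + (\<Sum>k=1..m. Df k * complex_of_real (\<gamma>' k)) * g x) (at t)"
    using f g \<gamma> by (auto intro!: has_vector_derivative_mult)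
  then show "((\<lambda>s. f (\<gamma> s) * g (\<gamma> s)) has_vector_derivative
      (\<Sum>k=1..m. (Df k * g x + f x * Dg k) * complex_of_real (\<gamma>' k))) (at t)"
    by (simp add: sum_distrib_left sum_distrib_right sum.distrib algebra_simps)
qed

lemma has_curve_gradient_comp:
  "has_curve_gradient m f Df x \<Longrightarrow> (\<phi> has_field_derivative c) (at (f x)) \<Longrightarrow>
   has_curve_gradient m (\<lambda>x. \<phi> (f x)) (\<lambda>k. c * Df k) x"
  unfolding has_curve_gradient_def
proof (intro allI impI)
  fix \<gamma> \<gamma>' t
  assume f: "\<forall>\<gamma> \<gamma>' t. curve_deriv m \<gamma> \<gamma>' t \<longrightarrow> \<gamma> t = x \<longrightarrow>
      ((\<lambda>s. f (\<gamma> s)) has_vector_derivative (\<Sum>k=1..m. Df k * complex_of_real (\<gamma>' k))) (at t)"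
    and \<phi>: "(\<phi> has_field_derivative c) (at (f x))" and \<gamma>: "curve_deriv m \<gamma> \<gamma>' t" "\<gamma> t = x"
  have "((\<phi> \<circ> (\<lambda>s. f (\<gamma> s))) has_vector_derivative (\<Sum>k=1..m. Df k * complex_of_real (\<gamma>' k)) * c) (at t)"
    using f \<phi> \<gamma> by (intro field_vector_diff_chain_at) auto
  then show "((\<lambda>s. \<phi> (f (\<gamma> s))) has_vector_derivative (\<Sum>k=1..m. c * Df k * complex_of_real (\<gamma>' k))) (at t)"
    by (simp add: o_def sum_distrib_left sum_distrib_right algebra_simps)
qed

lemma has_curve_gradient_continuous:
  "has_curve_gradient m f D x \<Longrightarrow> curve_deriv m \<gamma> \<gamma>' t \<Longrightarrow> \<gamma> t = x \<Longrightarrow> continuous (at t) (\<lambda>s. f (\<gamma> s))"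
  unfolding has_curve_gradient_def by (blast intro: has_vector_derivative_continuous)

lemma curve_deriv_line: "curve_deriv m (\<lambda>t. x(k := t)) (\<lambda>j. if j = k then 1 else 0) s"
  unfolding curve_deriv_def by (auto simp: fun_upd_def)

lemma has_curve_gradient_imp_partial:
  assumes "has_curve_gradient m f D x" "k \<in> {1..m}"
  shows "((\<lambda>t. f (x(k := t))) has_vector_derivative D k) (at (x k))"
proof -
  have "((\<lambda>t. f (x(k := t))) has_vector_derivative
      (\<Sum>j=1..m. D j * complex_of_real (if j = k then 1 else 0))) (at (x k))"
    using assms(1) curve_deriv_line[of m x k "x k"] unfolding has_curve_gradient_def by auto
  then show ?thesis
    using assms(2) by (simp add: if_distrib cong: if_cong)
qed

lemma pd_eq_curve_gradient: "has_curve_gradient m f D x \<Longrightarrow> k \<in> {1..m} \<Longrightarrow> pd k f x = D k"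
  unfolding pd_def by (rule vector_derivative_at, rule has_curve_gradient_imp_partial)

lemma has_pd_if_curve_gradient: "has_curve_gradient m f D x \<Longrightarrow> k \<in> {1..m} \<Longrightarrow> has_pd k f x"
  unfolding has_pd_def by (rule differentiableI_vector, rule has_curve_gradient_imp_partial)

lemma has_vector_derivative_transform_eventually:
  assumes "(f has_vector_derivative D) (at t)" and "eventually (\<lambda>s. f s = g s) (nhds t)"
  shows "(g has_vector_derivative D) (at t)"
proof -
  have "f t = g t" using assms(2) by (rule eventually_nhds_x_imp_x)
  with assms show ?thesis
    using has_vector_derivative_cong_ev[where f = f and g = g and x = t and S = UNIV and f' = D] by simp
qed

definition has_hessian_on ::
    "nat \<Rightarrow> (nat \<Rightarrow> real) set \<Rightarrow> ((nat \<Rightarrow> real) \<Rightarrow> complex) \<Rightarrow> (nat \<Rightarrow> (nat \<Rightarrow> real) \<Rightarrow> complex)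
     \<Rightarrow> (nat \<Rightarrow> nat \<Rightarrow> (nat \<Rightarrow> real) \<Rightarrow> complex) \<Rightarrow> bool" where
  "has_hessian_on m V f Df DDf \<longleftrightarrow> (\<forall>x\<in>V. has_curve_gradient m f (\<lambda>k. Df k x) x
     \<and> (\<forall>k. has_curve_gradient m (Df k) (\<lambda>j. DDf k j x) x) \<and> (\<forall>k j. DDf k j x = DDf j k x))"

lemma has_hessian_on_subset: "has_hessian_on m V f Df DDf \<Longrightarrow> W \<subseteq> V \<Longrightarrow> has_hessian_on m W f Df DDf"
  unfolding has_hessian_on_def by blast

lemma has_hessian_on_const: "has_hessian_on m V (\<lambda>x. c) (\<lambda>k x. 0) (\<lambda>k j x. 0)"
  unfolding has_hessian_on_def by (simp add: has_curve_gradient_const)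

lemma has_hessian_on_coord:
  "k \<in> {1..m} \<Longrightarrow> has_hessian_on m V (\<lambda>x. complex_of_real (x k)) (\<lambda>j x. if j = k then 1 else 0) (\<lambda>i j x. 0)"
  unfolding has_hessian_on_def
  by (auto intro: has_curve_gradient_coord has_curve_gradient_cong[OF has_curve_gradient_const])

lemma has_hessian_on_add:
  "has_hessian_on m V f Df DDf \<Longrightarrow> has_hessian_on m V g Dg DDg \<Longrightarrow>
   has_hessian_on m V (\<lambda>x. f x + g x) (\<lambda>k x. Df k x + Dg k x) (\<lambda>k j x. DDf k j x + DDg k j x)"
  unfolding has_hessian_on_def by (auto intro!: has_curve_gradient_add)

lemma has_hessian_on_mult:
  assumes f: "has_hessian_on m V f Df DDf" and g: "has_hessian_on m V g Dg DDg"
  shows "has_hessian_on m V (\<lambda>x. f x * g x) (\<lambda>k x. Df k x * g x + f x * Dg k x)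
    (\<lambda>k j x. DDf k j x * g x + Df k x * Dg j x + Df j x * Dg k x + f x * DDg k j x)"
  unfolding has_hessian_on_def
proof (intro ballI conjI allI)
  fix x k j assume x: "x \<in> V"
  have f1: "has_curve_gradient m f (\<lambda>k. Df k x) x" and f2: "has_curve_gradient m (Df k) (\<lambda>j. DDf k j x) x"
    and f3: "\<And>k j. DDf k j x = DDf j k x"
    using f x unfolding has_hessian_on_def by blast+
  have g1: "has_curve_gradient m g (\<lambda>k. Dg k x) x" and g2: "has_curve_gradient m (Dg k) (\<lambda>j. DDg k j x) x"
    and g3: "\<And>k j. DDg k j x = DDg j k x"
    using g x unfolding has_hessian_on_def by blast+
  show "has_curve_gradient m (\<lambda>x. f x * g x) (\<lambda>k. Df k x * g x + f x * Dg k x) x"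
    by (rule has_curve_gradient_mult[OF f1 g1])
  show "DDf k j x * g x + Df k x * Dg j x + Df j x * Dg k x + f x * DDg k j x =
        DDf j k x * g x + Df j x * Dg k x + Df k x * Dg j x + f x * DDg j k x"
    using f3 g3 by simp
  show "has_curve_gradient m (\<lambda>x. Df k x * g x + f x * Dg k x)
      (\<lambda>j. DDf k j x * g x + Df k x * Dg j x + Df j x * Dg k x + f x * DDg k j x) x"
    by (rule has_curve_gradient_cong[OF has_curve_gradient_add[OF
          has_curve_gradient_mult[OF f2 g1] has_curve_gradient_mult[OF f1 g2]]])
      (simp add: algebra_simps)
qed

lemma has_hessian_on_comp:
  assumes f: "has_hessian_on m V f Df DDf"
    and \<phi>: "\<And>x. x \<in> V \<Longrightarrow> (\<phi> has_field_derivative \<phi>' (f x)) (at (f x))"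
    and \<phi>': "\<And>x. x \<in> V \<Longrightarrow> (\<phi>' has_field_derivative \<phi>'' (f x)) (at (f x))"
  shows "has_hessian_on m V (\<lambda>x. \<phi> (f x)) (\<lambda>k x. \<phi>' (f x) * Df k x)
    (\<lambda>k j x. \<phi>'' (f x) * Df j x * Df k x + \<phi>' (f x) * DDf k j x)"
  unfolding has_hessian_on_def
proof (intro ballI conjI allI)
  fix x k j assume x: "x \<in> V"
  have f1: "has_curve_gradient m f (\<lambda>k. Df k x) x" and f2: "has_curve_gradient m (Df k) (\<lambda>j. DDf k j x) x"
    and f3: "\<And>k j. DDf k j x = DDf j k x"
    using f x unfolding has_hessian_on_def by blast+
  show "has_curve_gradient m (\<lambda>x. \<phi> (f x)) (\<lambda>k. \<phi>' (f x) * Df k x) x"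
    by (rule has_curve_gradient_comp[OF f1 \<phi>[OF x]])
  show "\<phi>'' (f x) * Df j x * Df k x + \<phi>' (f x) * DDf k j x = \<phi>'' (f x) * Df k x * Df j x + \<phi>' (f x) * DDf j k x"
    using f3 by simp
  show "has_curve_gradient m (\<lambda>x. \<phi>' (f x) * Df k x) (\<lambda>j. \<phi>'' (f x) * Df j x * Df k x + \<phi>' (f x) * DDf k j x) x"
    using has_curve_gradient_mult[OF has_curve_gradient_comp[OF f1 \<phi>'[OF x]] f2] by simp
qed

lemma has_hessian_on_imp_second_partial:
  assumes f: "has_hessian_on m V f Df DDf" and x: "x \<in> V" and k: "k \<in> {1..m}" and j: "j \<in> {1..m}"
    and line: "eventually (\<lambda>s. x(j := s) \<in> V) (nhds (x j))"
  shows "((\<lambda>t. pd k f (x(j := t))) has_vector_derivative DDf k j x) (at (x j))"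
proof -
  have "has_curve_gradient m (Df k) (\<lambda>j. DDf k j x) x"
    using f x unfolding has_hessian_on_def by blast
  then have "((\<lambda>t. Df k (x(j := t))) has_vector_derivative DDf k j x) (at (x j))"
    using j by (rule has_curve_gradient_imp_partial)
  moreover have "eventually (\<lambda>s. Df k (x(j := s)) = pd k f (x(j := s))) (nhds (x j))"
    using line by (rule eventually_mono) (use f k in \<open>auto simp: has_hessian_on_def pd_eq_curve_gradient\<close>)
  ultimately show ?thesis
    by (rule has_vector_derivative_transform_eventually)
qed

definition complex_subspace :: "((nat \<Rightarrow> complex) \<Rightarrow> bool) \<Rightarrow> bool" where
  "complex_subspace R \<longleftrightarrow> R (\<lambda>k. 0) \<and> (\<forall>u v. R u \<longrightarrow> R v \<longrightarrow> R (\<lambda>k. u k + v k))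
     \<and> (\<forall>c u. R u \<longrightarrow> R (\<lambda>k. c * u k))"

lemma complex_subspace_0: "complex_subspace R \<Longrightarrow> R (\<lambda>k. 0)"
  by (simp add: complex_subspace_def)

lemma complex_subspace_add: "complex_subspace R \<Longrightarrow> R u \<Longrightarrow> R v \<Longrightarrow> R (\<lambda>k. u k + v k)"
  by (simp add: complex_subspace_def)

lemma complex_subspace_scale: "complex_subspace R \<Longrightarrow> R u \<Longrightarrow> R (\<lambda>k. c * u k)"
  by (simp add: complex_subspace_def)

lemma complex_subspace_scale_right: "complex_subspace R \<Longrightarrow> R u \<Longrightarrow> R (\<lambda>k. u k * c)"
  using complex_subspace_scale[of R u c] by (simp add: mult.commute)

definition has_hessian_in ::
    "nat \<Rightarrow> (nat \<Rightarrow> real) set \<Rightarrow> ((nat \<Rightarrow> complex) \<Rightarrow> bool) \<Rightarrow> ((nat \<Rightarrow> real) \<Rightarrow> complex) \<Rightarrow> bool" where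
  "has_hessian_in m V R f \<longleftrightarrow> (\<exists>Df DDf. has_hessian_on m V f Df DDf
     \<and> (\<forall>x\<in>V. R (\<lambda>k. Df k x) \<and> (\<forall>k. R (\<lambda>j. DDf k j x))))"

lemma has_hessian_inI:
  "has_hessian_on m V f Df DDf \<Longrightarrow> (\<And>x. x \<in> V \<Longrightarrow> R (\<lambda>k. Df k x) \<and> (\<forall>k. R (\<lambda>j. DDf k j x))) \<Longrightarrow>
   has_hessian_in m V R f"
  unfolding has_hessian_in_def by blast

lemma has_hessian_in_const: "complex_subspace R \<Longrightarrow> has_hessian_in m V R (\<lambda>x. c)"
  by (rule has_hessian_inI[OF has_hessian_on_const]) (simp add: complex_subspace_0)

lemma has_hessian_in_add:
  assumes R: "complex_subspace R" and "has_hessian_in m V R f" "has_hessian_in m V R g"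
  shows "has_hessian_in m V R (\<lambda>x. f x + g x)"
proof -
  obtain Df DDf Dg DDg where f: "has_hessian_on m V f Df DDf" "\<forall>x\<in>V. R (\<lambda>k. Df k x) \<and> (\<forall>k. R (\<lambda>j. DDf k j x))"
    and g: "has_hessian_on m V g Dg DDg" "\<forall>x\<in>V. R (\<lambda>k. Dg k x) \<and> (\<forall>k. R (\<lambda>j. DDg k j x))"
    using assms(2,3) unfolding has_hessian_in_def by blast
  show ?thesis
    by (rule has_hessian_inI[OF has_hessian_on_add[OF f(1) g(1)]])
      (use f(2) g(2) in \<open>simp add: complex_subspace_add[OF R]\<close>)
qed

lemma has_hessian_in_mult:
  assumes R: "complex_subspace R" and "has_hessian_in m V R f" "has_hessian_in m V R g"
  shows "has_hessian_in m V R (\<lambda>x. f x * g x)"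
proof -
  obtain Df DDf Dg DDg where f: "has_hessian_on m V f Df DDf" "\<forall>x\<in>V. R (\<lambda>k. Df k x) \<and> (\<forall>k. R (\<lambda>j. DDf k j x))"
    and g: "has_hessian_on m V g Dg DDg" "\<forall>x\<in>V. R (\<lambda>k. Dg k x) \<and> (\<forall>k. R (\<lambda>j. DDg k j x))"
    using assms(2,3) unfolding has_hessian_in_def by blast
  show ?thesis
    by (rule has_hessian_inI[OF has_hessian_on_mult[OF f(1) g(1)]])
      (use f(2) g(2) in \<open>auto intro!: complex_subspace_add[OF R] complex_subspace_scale[OF R]
          complex_subspace_scale_right[OF R]\<close>)
qed

lemma has_hessian_in_comp:
  assumes R: "complex_subspace R" and "has_hessian_in m V R f"
    and \<phi>: "\<And>x. x \<in> V \<Longrightarrow> (\<phi> has_field_derivative \<phi>' (f x)) (at (f x)) \<and> \<phi>' field_differentiable (at (f x))"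
  shows "has_hessian_in m V R (\<lambda>x. \<phi> (f x))"
proof -
  obtain Df DDf where f: "has_hessian_on m V f Df DDf" "\<forall>x\<in>V. R (\<lambda>k. Df k x) \<and> (\<forall>k. R (\<lambda>j. DDf k j x))"
    using assms(2) unfolding has_hessian_in_def by blast
  have "has_hessian_on m V (\<lambda>x. \<phi> (f x)) (\<lambda>k x. \<phi>' (f x) * Df k x)
      (\<lambda>k j x. deriv \<phi>' (f x) * Df j x * Df k x + \<phi>' (f x) * DDf k j x)"
    using \<phi> by (intro has_hessian_on_comp[OF f(1)]) (auto simp: DERIV_deriv_iff_field_differentiable)
  then show ?thesis
    by (rule has_hessian_inI)
      (use f(2) in \<open>auto intro!: complex_subspace_add[OF R] complex_subspace_scale[OF R]
          complex_subspace_scale_right[OF R]\<close>)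
qed

lemma has_hessian_in_sum:
  assumes "complex_subspace R"
  shows "finite I \<Longrightarrow> (\<And>i. i \<in> I \<Longrightarrow> has_hessian_in m V R (f i)) \<Longrightarrow> has_hessian_in m V R (\<lambda>x. \<Sum>i\<in>I. f i x)"
  by (induct I rule: finite_induct) (auto intro: has_hessian_in_add[OF assms] has_hessian_in_const[OF assms])

lemma has_hessian_in_prod:
  assumes "complex_subspace R"
  shows "finite I \<Longrightarrow> (\<And>i. i \<in> I \<Longrightarrow> has_hessian_in m V R (f i)) \<Longrightarrow> has_hessian_in m V R (\<lambda>x. \<Prod>i\<in>I. f i x)"
  by (induct I rule: finite_induct) (auto intro: has_hessian_in_mult[OF assms] has_hessian_in_const[OF assms])

lemma has_hessian_in_power: "complex_subspace R \<Longrightarrow> has_hessian_in m V R f \<Longrightarrow> has_hessian_in m V R (\<lambda>x. f x ^ e)"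
  using has_hessian_in_prod[of R "{..<e}" m V "\<lambda>i. f"] by simp

lemma has_hessian_in_continuous:
  "has_hessian_in m UNIV R f \<Longrightarrow> curve_deriv m \<gamma> \<gamma>' t \<Longrightarrow> continuous (at t) (\<lambda>s. f (\<gamma> s))"
  unfolding has_hessian_in_def has_hessian_on_def by (blast intro: has_curve_gradient_continuous)

section \<open>The Lorentzian form and holomorphic covectors\<close>

definition lor_bilin :: "nat \<Rightarrow> (nat \<Rightarrow> complex) \<Rightarrow> (nat \<Rightarrow> complex) \<Rightarrow> complex" where
  "lor_bilin m u v = - u m * v m + (\<Sum>k=1..m-1. u k * v k)"

definition lor_trace :: "nat \<Rightarrow> (nat \<Rightarrow> nat \<Rightarrow> complex) \<Rightarrow> complex" where
  "lor_trace m M = - M m m + (\<Sum>k=1..m-1. M k k)"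

lemma lor_bilin_scale: "lor_bilin m (\<lambda>k. c * u k) (\<lambda>k. c * u k) = c\<^sup>2 * lor_bilin m u u"
  by (simp add: lor_bilin_def sum_distrib_left power2_eq_square algebra_simps)

lemma lor_trace_chain_rule: "lor_trace m (\<lambda>k j. a * u j * u k + c * M k j) = a * lor_bilin m u u + c * lor_trace m M"
  by (simp add: lor_bilin_def lor_trace_def sum.distrib sum_distrib_left algebra_simps)

lemma lor_bilin_expand: "lor_bilin m (\<lambda>k. u k * c + h k) (\<lambda>k. u k * c + h k) =
   c\<^sup>2 * lor_bilin m u u + 2 * c * lor_bilin m u h + lor_bilin m h h"
  by (simp add: lor_bilin_def sum.distrib sum_distrib_left power2_eq_square algebra_simps)

lemma lor_trace_expand: "lor_trace m (\<lambda>k j. M1 k j * r + u k * v j + u j * v k + b * M2 k j + M3 k j) =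
   r * lor_trace m M1 + 2 * lor_bilin m u v + b * lor_trace m M2 + lor_trace m M3"
  by (simp add: lor_bilin_def lor_trace_def sum.distrib sum_distrib_left sum_distrib_right algebra_simps)

definition x123_covector :: "(nat \<Rightarrow> complex) \<Rightarrow> bool" where
  "x123_covector u \<longleftrightarrow> (\<forall>k. k \<notin> {1, 2, 3} \<longrightarrow> u k = 0)"

text \<open>The span of the differentials \<open>dz\<^sub>l = dx\<^sub>2\<^sub>l\<^sub>+\<^sub>2 + i dx\<^sub>2\<^sub>l\<^sub>+\<^sub>3\<close> (\<open>l < n\<close>) and
  \<open>dz\<^sub>n = dx\<^sub>2\<^sub>n\<^sub>+\<^sub>2 - dx\<^sub>2\<^sub>n\<^sub>+\<^sub>3\<close>: it contains the gradient of every holomorphic function of \<open>zmap n x\<close>.\<close>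
definition dz_covector :: "nat \<Rightarrow> (nat \<Rightarrow> complex) \<Rightarrow> bool" where
  "dz_covector n u \<longleftrightarrow> (\<forall>k. k \<notin> {4..2*n+3} \<longrightarrow> u k = 0)
     \<and> (\<forall>l\<in>{1..n-1}. u (2*l+3) = \<i> * u (2*l+2)) \<and> u (2*n+3) = - u (2*n+2)"

lemma complex_subspace_x123_covector: "complex_subspace x123_covector"
  unfolding complex_subspace_def x123_covector_def by auto

lemma complex_subspace_dz_covector: "complex_subspace (dz_covector n)"
  unfolding complex_subspace_def dz_covector_def by (auto simp: algebra_simps)

lemma sum_split_dz_pairs:
  fixes g :: "nat \<Rightarrow> complex"
  assumes "n \<ge> 1"
  shows "(\<Sum>k=1..2*n+2. g k) = g 1 + g 2 + g 3 + (\<Sum>l=1..n-1. g (2*l+2) + g (2*l+3)) + g (2*n+2)"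
  using assms
proof (induction n rule: nat_induct_at_least)
  case base
  then show ?case by (simp add: numeral_eq_Suc)
next
  case (Suc n)
  have "(\<Sum>k=1..2 * Suc n + 2. g k) = (\<Sum>k=1..2*n+2. g k) + g (2*n+3) + g (2*n+4)"
    by (simp add: numeral_eq_Suc)
  moreover have "(\<Sum>l=1..Suc n - 1. g (2*l+2) + g (2*l+3)) = (\<Sum>l=1..n-1. g (2*l+2) + g (2*l+3)) + g (2*n+2) + g (2*n+3)"
    using Suc.hyps by (cases n) (simp_all add: algebra_simps)
  ultimately show ?case
    using Suc.IH by (simp only: algebra_simps) (simp add: numeral_eq_Suc)
qed

lemma lor_bilin_dz_covectors:
  assumes n: "n \<ge> 1" and u: "dz_covector n u" and v: "dz_covector n v"
  shows "lor_bilin (2*n+3) u v = 0"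
proof -
  have u123: "u 1 = 0" "u 2 = 0" "u 3 = 0" using u by (auto simp: dz_covector_def)
  have last: "u (2*n+3) = - u (2*n+2)" "v (2*n+3) = - v (2*n+2)" using u v by (auto simp: dz_covector_def)
  have pairs: "(\<Sum>l=1..n-1. u (2*l+2) * v (2*l+2) + u (2*l+3) * v (2*l+3)) = 0"
    using u v by (intro sum.neutral) (auto simp: dz_covector_def algebra_simps)
  have "lor_bilin (2*n+3) u v = - u (2*n+3) * v (2*n+3) + (\<Sum>k=1..2*n+2. u k * v k)"
    by (simp add: lor_bilin_def)
  then show ?thesis
    unfolding sum_split_dz_pairs[OF n] pairs last u123 by simp
qed

lemma lor_bilin_x123_dz_covector:
  assumes "x123_covector u" "dz_covector n v"
  shows "lor_bilin (2*n+3) u v = 0"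
proof -
  have "u k * v k = 0" for k
    using assms by (cases "k \<in> {1, 2, 3}") (auto simp: x123_covector_def dz_covector_def)
  then show ?thesis by (simp only: lor_bilin_def mult_minus_left) simp
qed

lemma lor_trace_dz_hessian:
  assumes n: "n \<ge> 1" and M: "\<And>k. dz_covector n (M k)" and sym: "\<And>k j. M k j = M j k"
  shows "lor_trace (2*n+3) M = 0"
proof -
  have M123: "M 1 1 = 0" "M 2 2 = 0" "M 3 3 = 0" using M by (auto simp: dz_covector_def)
  have pair: "M (2*l+3) (2*l+3) = - M (2*l+2) (2*l+2)" if "l \<in> {1..n-1}" for l
  proof -
    have "M (2*l+3) (2*l+3) = \<i> * M (2*l+3) (2*l+2)" using M[of "2*l+3"] that by (auto simp: dz_covector_def)
    also have "\<dots> = \<i> * (\<i> * M (2*l+2) (2*l+2))" using M[of "2*l+2"] that sym by (auto simp: dz_covector_def)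
    finally show ?thesis by simp
  qed
  have last: "M (2*n+3) (2*n+3) = M (2*n+2) (2*n+2)"
  proof -
    have "M (2*n+3) (2*n+3) = - M (2*n+3) (2*n+2)" using M[of "2*n+3"] by (auto simp: dz_covector_def)
    also have "\<dots> = M (2*n+2) (2*n+2)" using M[of "2*n+2"] sym by (auto simp: dz_covector_def)
    finally show ?thesis .
  qed
  have pairs: "(\<Sum>l=1..n-1. M (2*l+2) (2*l+2) + M (2*l+3) (2*l+3)) = 0"
    using pair by (intro sum.neutral) auto
  have "lor_trace (2*n+3) M = - M (2*n+3) (2*n+3) + (\<Sum>k=1..2*n+2. M k k)"
    by (simp add: lor_trace_def)
  then show ?thesis
    unfolding sum_split_dz_pairs[OF n] pairs last M123 by simp
qed

lemma finite_exps: "finite (exps n d)"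
proof (rule finite_subset[OF _ finite_set_of_finite_funs[of "{1..n}" "{..d}" 0]])
  have "\<alpha> k \<le> d" if "\<alpha> \<in> exps n d" "k \<in> {1..n}" for \<alpha> k
    using that member_le_sum[of k "{1..n}" \<alpha>] by (auto simp: exps_def)
  then show "exps n d \<subseteq> {\<alpha>. \<forall>k. (k \<in> {1..n} \<longrightarrow> \<alpha> k \<in> {..d}) \<and> (k \<notin> {1..n} \<longrightarrow> \<alpha> k = 0)}"
    by (auto simp: exps_def)
qed auto

lemma has_hessian_on_coord_pair:
  assumes "i \<in> {1..m}" "i + 1 \<in> {1..m}"
  shows "has_hessian_on m V (\<lambda>x. complex_of_real (x i) + c * complex_of_real (x (i+1)))
    (\<lambda>j x. (if j = i then 1 else 0) + c * (if j = i + 1 then 1 else 0)) (\<lambda>k j x. 0)"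
  using has_hessian_on_add[OF has_hessian_on_coord[OF assms(1)]
      has_hessian_on_mult[OF has_hessian_on_const has_hessian_on_coord[OF assms(2)]]]
  by simp

lemma has_hessian_in_zmap:
  assumes n: "n \<ge> 1" and k: "k \<in> {1..n}"
  shows "has_hessian_in (2*n+3) V (dz_covector n) (\<lambda>x. zmap n x k)"
proof (cases "k = n")
  case True
  have zk: "(\<lambda>x. zmap n x k) = (\<lambda>x. complex_of_real (x (2*n+2)) + (-1) * complex_of_real (x (2*n+2+1)))"
    using n True by (auto simp: zmap_def fun_eq_iff numeral_eq_Suc)
  show ?thesis unfolding zk
    by (rule has_hessian_inI[OF has_hessian_on_coord_pair]) (use n in \<open>auto simp: dz_covector_def\<close>)
next
  case False
  then have k': "1 \<le> k" "k \<le> n - 1" using k by auto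
  have zk: "(\<lambda>x. zmap n x k) = (\<lambda>x. complex_of_real (x (2*k+2)) + \<i> * complex_of_real (x (2*k+2+1)))"
    using k' by (auto simp: zmap_def Complex_eq fun_eq_iff numeral_eq_Suc)
  have parity: "2 * l \<noteq> Suc (2 * k)" "Suc (2 * l) \<noteq> 2 * k" for l
    by presburger+
  show ?thesis unfolding zk
    by (rule has_hessian_inI[OF has_hessian_on_coord_pair]) (use k' parity in \<open>auto simp: dz_covector_def\<close>)
qed

lemma has_hessian_in_hpoly: "n \<ge> 1 \<Longrightarrow> has_hessian_in (2*n+3) V (dz_covector n) (\<lambda>x. hpoly n d c (zmap n x))"
  unfolding hpoly_def
  by (intro has_hessian_in_sum[OF complex_subspace_dz_covector] finite_exps
      has_hessian_in_mult[OF complex_subspace_dz_covector] has_hessian_in_const[OF complex_subspace_dz_covector]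
      has_hessian_in_prod[OF complex_subspace_dz_covector] has_hessian_in_power[OF complex_subspace_dz_covector]
      has_hessian_in_zmap) auto

lemma has_hessian_in_quad3: "m \<ge> 3 \<Longrightarrow> has_hessian_in m V x123_covector (quad3 a)"
  unfolding quad3_def
  by (intro has_hessian_in_sum[OF complex_subspace_x123_covector] finite_atLeastAtMost
      has_hessian_in_mult[OF complex_subspace_x123_covector] has_hessian_in_const[OF complex_subspace_x123_covector]
      has_hessian_inI[OF has_hessian_on_coord]) (auto simp: x123_covector_def)

section \<open>Harmonic morphisms on Minkowski space\<close>

definition harmonic_morphism_on ::
    "nat \<Rightarrow> (nat \<Rightarrow> real) set \<Rightarrow> ((nat \<Rightarrow> real) \<Rightarrow> complex) \<Rightarrow> (nat \<Rightarrow> (nat \<Rightarrow> real) \<Rightarrow> complex)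
     \<Rightarrow> (nat \<Rightarrow> nat \<Rightarrow> (nat \<Rightarrow> real) \<Rightarrow> complex) \<Rightarrow> bool" where
  "harmonic_morphism_on m V F DF DDF \<longleftrightarrow> has_hessian_on m V F DF DDF
     \<and> (\<forall>x\<in>V. lor_bilin m (\<lambda>k. DF k x) (\<lambda>k. DF k x) = 0 \<and> lor_trace m (\<lambda>k j. DDF k j x) = 0)"

definition x123_harmonic_morphism :: "nat \<Rightarrow> (nat \<Rightarrow> real) set \<Rightarrow> ((nat \<Rightarrow> real) \<Rightarrow> complex) \<Rightarrow> bool" where
  "x123_harmonic_morphism m V f \<longleftrightarrow> (\<exists>Df DDf. harmonic_morphism_on m V f Df DDf
     \<and> (\<forall>x\<in>V. x123_covector (\<lambda>k. Df k x) \<and> (\<forall>k. x123_covector (\<lambda>j. DDf k j x))))"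

lemma x123_harmonic_morphism_subset: "x123_harmonic_morphism m V f \<Longrightarrow> W \<subseteq> V \<Longrightarrow> x123_harmonic_morphism m W f"
  unfolding x123_harmonic_morphism_def harmonic_morphism_on_def using has_hessian_on_subset by (metis subsetD)

lemma x123_harmonic_morphism_comp:
  assumes f: "x123_harmonic_morphism m V f"
    and \<phi>: "\<And>x. x \<in> V \<Longrightarrow> (\<phi> has_field_derivative \<phi>' (f x)) (at (f x)) \<and> \<phi>' field_differentiable (at (f x))"
  shows "x123_harmonic_morphism m V (\<lambda>x. \<phi> (f x))"
proof -
  obtain Df DDf where hm: "harmonic_morphism_on m V f Df DDf"
    and x123: "\<forall>x\<in>V. x123_covector (\<lambda>k. Df k x) \<and> (\<forall>k. x123_covector (\<lambda>j. DDf k j x))"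
    using f unfolding x123_harmonic_morphism_def by blast
  show ?thesis
    unfolding x123_harmonic_morphism_def harmonic_morphism_on_def
  proof (intro exI conjI)
    show "has_hessian_on m V (\<lambda>x. \<phi> (f x)) (\<lambda>k x. \<phi>' (f x) * Df k x)
        (\<lambda>k j x. deriv \<phi>' (f x) * Df j x * Df k x + \<phi>' (f x) * DDf k j x)"
      using hm \<phi> unfolding harmonic_morphism_on_def
      by (intro has_hessian_on_comp) (auto simp: DERIV_deriv_iff_field_differentiable)
  qed (use hm x123 in \<open>auto simp: harmonic_morphism_on_def lor_bilin_scale lor_trace_chain_rule
      intro!: complex_subspace_add[OF complex_subspace_x123_covector]
      complex_subspace_scale[OF complex_subspace_x123_covector]
      complex_subspace_scale_right[OF complex_subspace_x123_covector]\<close>)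
qed

lemma x123_harmonic_morphism_power: "x123_harmonic_morphism m V f \<Longrightarrow> x123_harmonic_morphism m V (\<lambda>x. f x ^ e)"
  by (erule x123_harmonic_morphism_comp[where \<phi>' = "\<lambda>w. of_nat e * w ^ (e - 1)"])
    (auto intro!: derivative_eq_intros derivative_intros)

lemma x123_harmonic_morphism_csqrt:
  assumes "x123_harmonic_morphism m V f" and nonpos: "\<And>x. x \<in> V \<Longrightarrow> f x \<notin> \<real>\<^sub>\<le>\<^sub>0"
  shows "x123_harmonic_morphism m V (\<lambda>x. csqrt (f x))"
proof (rule x123_harmonic_morphism_comp[OF assms(1), where \<phi>' = "\<lambda>w. inverse (2 * csqrt w)"])
  fix x assume "x \<in> V"
  then have "f x \<notin> \<real>\<^sub>\<le>\<^sub>0" "f x \<noteq> 0"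
    using nonpos[of x] by (metis nonpos_Reals_zero_I)+
  then show "(csqrt has_field_derivative inverse (2 * csqrt (f x))) (at (f x)) \<and>
      (\<lambda>w. inverse (2 * csqrt w)) field_differentiable at (f x)"
    by (intro conjI has_field_derivative_csqrt derivative_intros field_differentiable_at_csqrt) auto
qed

lemma lor_bilin_x123_covector:
  assumes "m \<ge> 4" "x123_covector u"
  shows "lor_bilin m u u = (\<Sum>k=1..3. u k * u k)"
proof -
  have "(\<Sum>k=1..m-1. u k * u k) = (\<Sum>k=1..3. u k * u k)"
    using assms by (intro sum.mono_neutral_right) (auto simp: x123_covector_def)
  moreover have "u m = 0" using assms by (simp add: x123_covector_def)
  ultimately show ?thesis by (simp add: lor_bilin_def)
qed

lemma lor_trace_x123_covectors:
  assumes "m \<ge> 4" "\<And>k. x123_covector (M k)"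
  shows "lor_trace m M = (\<Sum>k=1..3. M k k)"
proof -
  have "(\<Sum>k=1..m-1. M k k) = (\<Sum>k=1..3. M k k)"
    using assms by (intro sum.mono_neutral_right) (auto simp: x123_covector_def)
  moreover have "M m m = 0" using assms by (simp add: x123_covector_def)
  ultimately show ?thesis by (simp add: lor_trace_def)
qed

lemma x123_harmonic_morphism_quad3:
  assumes m: "m \<ge> 4"
    and tau: "\<forall>x. tauE 3 (quad3 a) x = 0" and kappa: "\<forall>x. kappaE 3 (quad3 a) (quad3 a) x = 0"
  shows "x123_harmonic_morphism m UNIV (quad3 a)"
proof -
  obtain Df DDf where hess: "has_hessian_on m UNIV (quad3 a) Df DDf"
    and x123: "\<And>x. x123_covector (\<lambda>k. Df k x) \<and> (\<forall>k. x123_covector (\<lambda>j. DDf k j x))"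
    using has_hessian_in_quad3[of m UNIV a] m unfolding has_hessian_in_def by auto
  have pd1: "pd k (quad3 a) = Df k" if "k \<in> {1..m}" for k
  proof
    fix x
    have "has_curve_gradient m (quad3 a) (\<lambda>k. Df k x) x" using hess by (simp add: has_hessian_on_def)
    then show "pd k (quad3 a) x = Df k x" using that by (rule pd_eq_curve_gradient)
  qed
  have pd2: "pd j (pd k (quad3 a)) x = DDf k j x" if "k \<in> {1..m}" "j \<in> {1..m}" for k j x
  proof -
    have "has_curve_gradient m (Df k) (\<lambda>j. DDf k j x) x" using hess unfolding has_hessian_on_def by blast
    then show ?thesis using that by (simp add: pd1 pd_eq_curve_gradient)
  qed
  have "lor_bilin m (\<lambda>k. Df k x) (\<lambda>k. Df k x) = kappaE 3 (quad3 a) (quad3 a) x" for x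
    using m x123 pd1 by (simp add: lor_bilin_x123_covector kappaE_def)
  moreover have "lor_trace m (\<lambda>k j. DDf k j x) = tauE 3 (quad3 a) x" for x
    using m x123 pd2 by (simp add: lor_trace_x123_covectors tauE_def)
  ultimately show ?thesis
    using hess x123 tau kappa unfolding x123_harmonic_morphism_def harmonic_morphism_on_def by auto
qed

lemma x123_harmonic_morphism_half_pow:
  assumes p: "x123_harmonic_morphism m UNIV p" and V: "odd d \<Longrightarrow> \<forall>x\<in>V. p x \<notin> \<real>\<^sub>\<le>\<^sub>0"
  shows "x123_harmonic_morphism m V (\<lambda>x. half_pow (p x) d)"
proof (cases "even d")
  case True
  then show ?thesis
    using x123_harmonic_morphism_subset[OF x123_harmonic_morphism_power[OF p]] by (simp add: half_pow_def)
next
  case False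
  have "x123_harmonic_morphism m V p"
    using p by (rule x123_harmonic_morphism_subset) simp
  then have "x123_harmonic_morphism m V (\<lambda>x. csqrt (p x) ^ d)"
    using False V by (intro x123_harmonic_morphism_power x123_harmonic_morphism_csqrt) auto
  then show ?thesis
    using False by (simp add: half_pow_def)
qed

lemma of_real_nonpos_eq: "complex_of_real ` {t. t \<le> 0} = \<real>\<^sub>\<le>\<^sub>0"
  by (auto simp: nonpos_Reals_def)

lemma harmonic_morphism_on_x123_dz:
  assumes n: "n \<ge> 1" and "x123_harmonic_morphism (2*n+3) V B"
    and "has_hessian_in (2*n+3) V (dz_covector n) R" and "has_hessian_in (2*n+3) V (dz_covector n) G"
  shows "\<exists>DF DDF. harmonic_morphism_on (2*n+3) V (\<lambda>x. B x * R x + G x) DF DDF"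
proof -
  let ?m = "2*n+3"
  obtain DB DDB where B_hess: "has_hessian_on ?m V B DB DDB"
    and B_hm: "\<forall>x\<in>V. lor_bilin ?m (\<lambda>k. DB k x) (\<lambda>k. DB k x) = 0 \<and> lor_trace ?m (\<lambda>k j. DDB k j x) = 0"
    and B_x123: "\<forall>x\<in>V. x123_covector (\<lambda>k. DB k x) \<and> (\<forall>k. x123_covector (\<lambda>j. DDB k j x))"
    using assms(2) unfolding x123_harmonic_morphism_def harmonic_morphism_on_def by blast
  obtain DR DDR where R: "has_hessian_on ?m V R DR DDR"
    and R_dz: "\<forall>x\<in>V. dz_covector n (\<lambda>k. DR k x) \<and> (\<forall>k. dz_covector n (\<lambda>j. DDR k j x))"
    using assms(3) unfolding has_hessian_in_def by blast
  obtain DG DDG where G: "has_hessian_on ?m V G DG DDG"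
    and G_dz: "\<forall>x\<in>V. dz_covector n (\<lambda>k. DG k x) \<and> (\<forall>k. dz_covector n (\<lambda>j. DDG k j x))"
    using assms(4) unfolding has_hessian_in_def by blast
  have "harmonic_morphism_on ?m V (\<lambda>x. B x * R x + G x) (\<lambda>k x. DB k x * R x + (B x * DR k x + DG k x))
      (\<lambda>k j x. DDB k j x * R x + DB k x * DR j x + DB j x * DR k x + B x * DDR k j x + DDG k j x)"
    unfolding harmonic_morphism_on_def
  proof (intro conjI ballI)
    show "has_hessian_on ?m V (\<lambda>x. B x * R x + G x) (\<lambda>k x. DB k x * R x + (B x * DR k x + DG k x))
        (\<lambda>k j x. DDB k j x * R x + DB k x * DR j x + DB j x * DR k x + B x * DDR k j x + DDG k j x)"
      using has_hessian_on_add[OF has_hessian_on_mult[OF B_hess R] G] by (simp add: add.assoc)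
  next
    fix x assume x: "x \<in> V"
    have h: "dz_covector n (\<lambda>k. B x * DR k x + DG k x)"
      using R_dz G_dz x complex_subspace_add[OF complex_subspace_dz_covector]
        complex_subspace_scale[OF complex_subspace_dz_covector] by blast
    show "lor_bilin ?m (\<lambda>k. DB k x * R x + (B x * DR k x + DG k x)) (\<lambda>k. DB k x * R x + (B x * DR k x + DG k x)) = 0"
      unfolding lor_bilin_expand
      using B_hm B_x123 x lor_bilin_x123_dz_covector h lor_bilin_dz_covectors[OF n h h] by simp
    have sym: "DDR k j x = DDR j k x" "DDG k j x = DDG j k x" for k j
      using R G x unfolding has_hessian_on_def by blast+
    show "lor_trace ?m (\<lambda>k j. DDB k j x * R x + DB k x * DR j x + DB j x * DR k x + B x * DDR k j x + DDG k j x) = 0"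
      unfolding lor_trace_expand
      using B_hm B_x123 R_dz G_dz x sym lor_bilin_x123_dz_covector[of "\<lambda>k. DB k x" n "\<lambda>k. DR k x"]
        lor_trace_dz_hessian[OF n, of "\<lambda>k j. DDR k j x"] lor_trace_dz_hessian[OF n, of "\<lambda>k j. DDG k j x"]
      by simp
  qed
  then show ?thesis by blast
qed

lemma has_hessian_in_inverse_hpoly:
  assumes "n \<ge> 1" and "\<forall>x\<in>V. hpoly n d c (zmap n x) \<noteq> 0"
  shows "has_hessian_in (2*n+3) V (dz_covector n) (\<lambda>x. inverse (hpoly n d c (zmap n x)))"
  using assms
  by (intro has_hessian_in_comp[OF complex_subspace_dz_covector has_hessian_in_hpoly,
        where \<phi>' = "\<lambda>w. - (inverse w ^ Suc (Suc 0))"] conjI DERIV_inverse derivative_intros) auto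

lemma harmonic_morphism_on_PhiHat:
  assumes n: "n \<ge> 1"
    and tau: "\<forall>x. tauE 3 (quad3 a) x = 0" and kappa: "\<forall>x. kappaE 3 (quad3 a) (quad3 a) x = 0"
  shows "\<exists>DF DDF. harmonic_morphism_on (2*n+3) (Vset n d a cQ) (PhiHat n d a cP cQ) DF DDF"
proof -
  let ?V = "Vset n d a cQ" and ?Q = "\<lambda>x. inverse (hpoly n d cQ (zmap n x))"
  have Phi: "PhiHat n d a cP cQ = (\<lambda>x. half_pow (quad3 a x) d * ?Q x + hpoly n d cP (zmap n x) * ?Q x)"
    by (auto simp: fun_eq_iff PhiHat_def divide_inverse distrib_right)
  have B: "x123_harmonic_morphism (2*n+3) ?V (\<lambda>x. half_pow (quad3 a x) d)"
    using n x123_harmonic_morphism_quad3[OF _ tau kappa]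
    by (intro x123_harmonic_morphism_half_pow) (auto simp: Vset_def of_real_nonpos_eq)
  have Q: "has_hessian_in (2*n+3) ?V (dz_covector n) ?Q"
    using n by (intro has_hessian_in_inverse_hpoly) (auto simp: Vset_def)
  have PQ: "has_hessian_in (2*n+3) ?V (dz_covector n) (\<lambda>x. hpoly n d cP (zmap n x) * ?Q x)"
    using n Q by (intro has_hessian_in_mult[OF complex_subspace_dz_covector] has_hessian_in_hpoly)
  show ?thesis
    unfolding Phi by (rule harmonic_morphism_on_x123_dz[OF n B Q PQ])
qed

lemma continuous_at_eventually_in:
  "continuous (at t) g \<Longrightarrow> open S \<Longrightarrow> g t \<in> S \<Longrightarrow> eventually (\<lambda>s. g s \<in> S) (nhds t)"
  by (auto simp: continuous_at_open eventually_nhds)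

lemma eventually_curve_in_Vset:
  assumes n: "n \<ge> 1" and x: "x \<in> Vset n d a cQ" and \<gamma>: "curve_deriv (2*n+3) \<gamma> \<gamma>' t" "\<gamma> t = x"
    and supp: "\<forall>s. supp_in (2*n+3) (\<gamma> s)"
  shows "eventually (\<lambda>s. \<gamma> s \<in> Vset n d a cQ) (nhds t)"
proof -
  let ?m = "2*n+3"
  have "continuous (at t) (\<lambda>s. \<gamma> s k)" if "k \<in> {1..?m}" for k
    using \<gamma>(1) that unfolding curve_deriv_def by (blast intro: DERIV_isCont)
  then have "continuous (at t) (\<lambda>s. lor ?m (\<gamma> s) (\<gamma> s))"
    unfolding lor_def by (intro continuous_intros) auto
  then have timelike: "eventually (\<lambda>s. lor ?m (\<gamma> s) (\<gamma> s) \<in> {r. r < 0}) (nhds t)"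
    by (rule continuous_at_eventually_in) (use x \<gamma>(2) in \<open>auto simp: Vset_def Uset_def open_Collect_less\<close>)
  have "continuous (at t) (\<lambda>s. hpoly n d cQ (zmap n (\<gamma> s)))"
    by (rule has_hessian_in_continuous[OF has_hessian_in_hpoly[OF n] \<gamma>(1)])
  then have Q: "eventually (\<lambda>s. hpoly n d cQ (zmap n (\<gamma> s)) \<in> - {0}) (nhds t)"
    by (rule continuous_at_eventually_in) (use x \<gamma>(2) in \<open>auto simp: Vset_def\<close>)
  have p: "eventually (\<lambda>s. odd d \<longrightarrow> quad3 a (\<gamma> s) \<in> - \<real>\<^sub>\<le>\<^sub>0) (nhds t)"
  proof (cases "odd d")
    case True
    have "continuous (at t) (\<lambda>s. quad3 a (\<gamma> s))"
      by (rule has_hessian_in_continuous[OF has_hessian_in_quad3 \<gamma>(1)]) auto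
    then have "eventually (\<lambda>s. quad3 a (\<gamma> s) \<in> - \<real>\<^sub>\<le>\<^sub>0) (nhds t)"
      by (rule continuous_at_eventually_in) (use x \<gamma>(2) True in \<open>auto simp: Vset_def of_real_nonpos_eq\<close>)
    then show ?thesis by (rule eventually_mono) simp
  qed simp
  show ?thesis
    using timelike Q p by eventually_elim (use supp in \<open>auto simp: Vset_def Uset_def of_real_nonpos_eq\<close>)
qed

lemma eventually_line_in_Vset:
  assumes "n \<ge> 1" and x: "x \<in> Vset n d a cQ" and j: "j \<in> {1..2*n+3}"
  shows "eventually (\<lambda>s. x(j := s) \<in> Vset n d a cQ) (nhds (x j))"
proof (rule eventually_curve_in_Vset[OF assms(1) x curve_deriv_line])
  show "\<forall>s. supp_in (2*n+3) (x(j := s))"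
    using x j by (auto simp: Vset_def Uset_def supp_in_def)
qed simp

lemma harmonic_morphism_L_if_harmonic_morphism_on:
  assumes "m \<ge> 1" and hm: "harmonic_morphism_on m V F DF DDF"
    and lines: "\<And>x j. x \<in> V \<Longrightarrow> j \<in> {1..m} \<Longrightarrow> eventually (\<lambda>s. x(j := s) \<in> V) (nhds (x j))"
  shows "harmonic_morphism_L m V F"
  unfolding harmonic_morphism_L_def
proof (intro ballI conjI)
  fix x assume x: "x \<in> V"
  have hess: "has_hessian_on m V F DF DDF" using hm by (simp add: harmonic_morphism_on_def)
  have grad: "has_curve_gradient m F (\<lambda>k. DF k x) x" using hess x by (simp add: has_hessian_on_def)
  have second: "((\<lambda>t. pd k F (x(j := t))) has_vector_derivative DDF k j x) (at (x j))"
    if "k \<in> {1..m}" "j \<in> {1..m}" for k j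
    using has_hessian_on_imp_second_partial[OF hess x that lines[OF x that(2)]] .
  show "twice_pd m F x"
    unfolding twice_pd_def has_pd_def
    using has_pd_if_curve_gradient[OF grad, unfolded has_pd_def] second by (blast intro: differentiableI_vector)
  have pd2: "pd k (pd k F) x = DDF k k x" if "k \<in> {1..m}" for k
    unfolding pd_def[of k "pd k F" x] by (rule vector_derivative_at[OF second[OF that that]])
  have "tauL m F x = lor_trace m (\<lambda>k j. DDF k j x)"
    unfolding tauL_def lor_trace_def using \<open>m \<ge> 1\<close> pd2
    by (intro arg_cong2[where f = "(+)"] arg_cong[where f = uminus] sum.cong) auto
  then show "tauL m F x = 0" using hm x by (simp add: harmonic_morphism_on_def)
  have "kappaL m F F x = lor_bilin m (\<lambda>k. DF k x) (\<lambda>k. DF k x)"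
    unfolding kappaL_def lor_bilin_def using \<open>m \<ge> 1\<close> pd_eq_curve_gradient[OF grad]
    by (intro arg_cong2[where f = "(+)"] sum.cong) auto
  then show "kappaL m F F x = 0" using hm x by (simp add: harmonic_morphism_on_def)
qed

section \<open>Homogeneity and the Euler relations\<close>

definition dilate :: "real \<Rightarrow> (nat \<Rightarrow> real) \<Rightarrow> (nat \<Rightarrow> real)" where
  "dilate c x = (\<lambda>k. c * x k)"

lemma dilate_1 [simp]: "dilate 1 x = x"
  by (simp add: dilate_def)

lemma quad3_dilate: "quad3 a (dilate c x) = (complex_of_real c)\<^sup>2 * quad3 a x"
  by (simp add: quad3_def dilate_def sum_distrib_left algebra_simps power2_eq_square)

lemma lor_dilate: "lor m (dilate c x) (dilate c x) = c\<^sup>2 * lor m x x"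
  by (simp add: lor_def dilate_def sum_distrib_left algebra_simps power2_eq_square)

lemma zmap_dilate: "zmap n (dilate c x) = (\<lambda>k. of_real c * zmap n x k)"
  by (auto simp: fun_eq_iff zmap_def dilate_def Complex_eq algebra_simps)

lemma hpoly_homogeneous: "hpoly n d c (\<lambda>k. w * z k) = w ^ d * hpoly n d c z"
proof -
  have "(\<Prod>k=1..n. (w * z k) ^ \<alpha> k) = w ^ d * (\<Prod>k=1..n. z k ^ \<alpha> k)" if "\<alpha> \<in> exps n d" for \<alpha>
    using that by (simp add: power_mult_distrib prod.distrib power_sum[symmetric] exps_def)
  then show ?thesis
    unfolding hpoly_def sum_distrib_left by (intro sum.cong) (simp_all add: algebra_simps)
qed

lemma csqrt_of_real_sq_mult: "c > 0 \<Longrightarrow> csqrt ((complex_of_real c)\<^sup>2 * w) = of_real c * csqrt w"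
  by (rule csqrt_unique)
    (use csqrt_principal[of w] in \<open>auto simp: power_mult_distrib zero_less_mult_iff zero_le_mult_iff\<close>)

lemma half_pow_of_real_sq_mult: "c > 0 \<Longrightarrow> half_pow ((complex_of_real c)\<^sup>2 * w) d = of_real c ^ d * half_pow w d"
  by (auto simp: half_pow_def csqrt_of_real_sq_mult power_mult_distrib power_mult[symmetric] elim!: evenE)

lemma of_real_sq_mult_nonpos_Reals_iff:
  "c > 0 \<Longrightarrow> (complex_of_real c)\<^sup>2 * w \<in> \<real>\<^sub>\<le>\<^sub>0 \<longleftrightarrow> w \<in> \<real>\<^sub>\<le>\<^sub>0"
  by (simp add: complex_nonpos_Reals_iff power2_eq_square mult_le_0_iff)

lemma PhiHat_dilate: "c > 0 \<Longrightarrow> PhiHat n d a cP cQ (dilate c x) = PhiHat n d a cP cQ x"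
  by (simp add: PhiHat_def quad3_dilate half_pow_of_real_sq_mult zmap_dilate hpoly_homogeneous
      distrib_left[symmetric] mult_divide_mult_cancel_left)

lemma Vset_dilate:
  assumes "c > 0" "x \<in> Vset n d a cQ"
  shows "dilate c x \<in> Vset n d a cQ"
proof -
  have "supp_in (2*n+3) (dilate c x)"
    using assms(2) by (auto simp: Vset_def Uset_def supp_in_def dilate_def)
  then show ?thesis
    using assms by (auto simp: Vset_def Uset_def lor_dilate quad3_dilate zmap_dilate hpoly_homogeneous
        of_real_nonpos_eq of_real_sq_mult_nonpos_Reals_iff mult_pos_neg)
qed

lemma pistar_dilate: "pistar m x = dilate (1 / sqrt (- lor m x x)) x"
  by (simp add: pistar_def dilate_def)

lemma pistar_Vset:
  assumes x: "x \<in> Vset n d a cQ"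
  shows "pistar (2*n+3) x \<in> Vset n d a cQ \<inter> Hset (2*n+3) \<and> PhiHat n d a cP cQ (pistar (2*n+3) x) = PhiHat n d a cP cQ x"
proof -
  let ?m = "2*n+3"
  define c where "c = 1 / sqrt (- lor ?m x x)"
  have l: "lor ?m x x < 0" and supp: "supp_in ?m x" using x by (auto simp: Vset_def Uset_def)
  then have c: "c > 0" by (simp add: c_def)
  have "lor ?m (dilate c x) (dilate c x) = -1"
    using l by (simp add: lor_dilate c_def power_divide)
  moreover have "supp_in ?m (dilate c x)" using supp by (simp add: supp_in_def dilate_def)
  ultimately show ?thesis
    using Vset_dilate[OF c x] PhiHat_dilate[OF c] by (simp add: pistar_dilate c_def[symmetric] Hset_def)
qed

lemma curve_deriv_dilate: "curve_deriv m (\<lambda>c. dilate c x) x t"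
  unfolding curve_deriv_def dilate_def by (auto intro!: derivative_eq_intros)

lemma curve_deriv_dilate_line: "curve_deriv m (\<lambda>u. dilate c (x(k := u))) (\<lambda>l. if l = k then c else 0) t"
  unfolding curve_deriv_def dilate_def by (auto intro!: derivative_eq_intros)

lemma eventually_pos_nhds_1: "eventually (\<lambda>c::real. c > 0) (nhds 1)"
  using eventually_nhds_in_open[of "{0<..}" "1::real"] by simp

locale degree0_homogeneous =
  fixes m :: nat and V :: "(nat \<Rightarrow> real) set" and F :: "(nat \<Rightarrow> real) \<Rightarrow> complex"
    and DF :: "nat \<Rightarrow> (nat \<Rightarrow> real) \<Rightarrow> complex" and DDF :: "nat \<Rightarrow> nat \<Rightarrow> (nat \<Rightarrow> real) \<Rightarrow> complex"
  assumes hessian: "has_hessian_on m V F DF DDF"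
    and cone: "\<And>x c. x \<in> V \<Longrightarrow> c > 0 \<Longrightarrow> dilate c x \<in> V"
    and invariant: "\<And>x c. c > 0 \<Longrightarrow> F (dilate c x) = F x"
begin

lemma euler_gradient:
  assumes x: "x \<in> V"
  shows "(\<Sum>l=1..m. DF l x * complex_of_real (x l)) = 0"
proof -
  have "has_curve_gradient m F (\<lambda>k. DF k x) x" using hessian x by (simp add: has_hessian_on_def)
  then have chain: "((\<lambda>c. F (dilate c x)) has_vector_derivative
      (\<Sum>l=1..m. DF l x * complex_of_real (x l))) (at 1)"
    using curve_deriv_dilate[of m x 1] unfolding has_curve_gradient_def by simp
  have "eventually (\<lambda>c. F x = F (dilate c x)) (nhds 1)"
    using eventually_pos_nhds_1 by (rule eventually_mono) (simp add: invariant)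
  then have "((\<lambda>c. F (dilate c x)) has_vector_derivative 0) (at 1)"
    by (rule has_vector_derivative_transform_eventually[OF has_vector_derivative_const])
  with chain show ?thesis by (rule vector_derivative_unique_at)
qed

lemma gradient_dilate:
  assumes x: "x \<in> V" and c: "c > 0" and k: "k \<in> {1..m}"
  shows "DF k (dilate c x) = DF k x / of_real c"
proof -
  have "has_curve_gradient m F (\<lambda>k. DF k (dilate c x)) (dilate c x)"
    using hessian cone[OF x c] by (simp add: has_hessian_on_def)
  then have "((\<lambda>u. F (dilate c (x(k := u)))) has_vector_derivative
      (\<Sum>l=1..m. DF l (dilate c x) * of_real (if l = k then c else 0))) (at (x k))"
    unfolding has_curve_gradient_def using curve_deriv_dilate_line[of m c x k "x k"] by simp
  then have chain: "((\<lambda>u. F (dilate c (x(k := u)))) has_vector_derivative DF k (dilate c x) * of_real c) (at (x k))"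
    using k by (simp add: if_distrib cong: if_cong)
  have "has_curve_gradient m F (\<lambda>k. DF k x) x" using hessian x by (simp add: has_hessian_on_def)
  then have "((\<lambda>u. F (dilate c (x(k := u)))) has_vector_derivative DF k x) (at (x k))"
    using has_curve_gradient_imp_partial[OF _ k] c by (simp add: invariant)
  with chain have "DF k (dilate c x) * of_real c = DF k x"
    by (rule vector_derivative_unique_at)
  then show ?thesis using c by (simp add: field_simps)
qed

text \<open>Differentiate \<open>c \<mapsto> DF k (dilate c x) = DF k x / c\<close> at \<open>c = 1\<close>.\<close>
lemma euler_hessian:
  assumes x: "x \<in> V" and k: "k \<in> {1..m}"
  shows "(\<Sum>l=1..m. DDF k l x * complex_of_real (x l)) = - DF k x"
proof -
  have "has_curve_gradient m (DF k) (\<lambda>j. DDF k j x) x" using hessian x unfolding has_hessian_on_def by blast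
  then have chain: "((\<lambda>c. DF k (dilate c x)) has_vector_derivative
      (\<Sum>l=1..m. DDF k l x * complex_of_real (x l))) (at 1)"
    using curve_deriv_dilate[of m x 1] unfolding has_curve_gradient_def by simp
  have "((\<lambda>c. DF k x * complex_of_real (inverse c)) has_vector_derivative DF k x * of_real (- 1)) (at 1)"
    by (intro has_vector_derivative_mult_right has_vector_derivative_of_real) (auto intro!: derivative_eq_intros)
  moreover have "eventually (\<lambda>c. DF k x * complex_of_real (inverse c) = DF k (dilate c x)) (nhds 1)"
    using eventually_pos_nhds_1 by (rule eventually_mono) (simp add: gradient_dilate[OF x _ k] divide_inverse)
  ultimately have "((\<lambda>c. DF k (dilate c x)) has_vector_derivative DF k x * of_real (- 1)) (at 1)"
    by (rule has_vector_derivative_transform_eventually)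
  with chain show ?thesis by (simp add: vector_derivative_unique_at)
qed

end

section \<open>Restriction to the hyperboloid\<close>

definition chart_height :: "nat \<Rightarrow> (nat \<Rightarrow> real) \<Rightarrow> real" where
  "chart_height N w = sqrt (1 + (\<Sum>i=1..N. (w i)\<^sup>2))"

lemma chart_height_sq: "(chart_height N w)\<^sup>2 = 1 + (\<Sum>i=1..N. (w i)\<^sup>2)"
  by (simp add: chart_height_def sum_nonneg add_nonneg_nonneg)

lemma chart_height_pos: "chart_height N w > 0"
  by (simp add: chart_height_def sum_nonneg add_pos_nonneg)

lemma hchart_eq:
  "hchart N \<sigma> w = (\<lambda>k. if k \<in> {1..N} then w k else if k = N + 1 then \<sigma> * chart_height N w else 0)"
  unfolding hchart_def chart_height_def by (rule refl)

lemma hsqrtdet_eq: "hsqrtdet N w = 1 / chart_height N w"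
  by (simp add: hsqrtdet_def chart_height_def)

lemma sum_power2_fun_upd:
  fixes w :: "nat \<Rightarrow> real"
  assumes i: "i \<in> {1..N}"
  shows "(\<Sum>l=1..N. ((w(i := u)) l)\<^sup>2) = (\<Sum>l=1..N. (w l)\<^sup>2) - (w i)\<^sup>2 + u\<^sup>2"
proof -
  have "(\<Sum>l=1..N. ((w(i := u)) l)\<^sup>2) = u\<^sup>2 + (\<Sum>l\<in>{1..N}-{i}. ((w(i := u)) l)\<^sup>2)"
    using i by (simp add: sum.remove)
  also have "(\<Sum>l\<in>{1..N}-{i}. ((w(i := u)) l)\<^sup>2) = (\<Sum>l\<in>{1..N}-{i}. (w l)\<^sup>2)"
    by (rule sum.cong) auto
  also have "\<dots> = (\<Sum>l=1..N. (w l)\<^sup>2) - (w i)\<^sup>2"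
    using i by (simp add: sum_diff1)
  finally show ?thesis by simp
qed

lemma chart_height_has_derivative:
  assumes i: "i \<in> {1..N}"
  shows "((\<lambda>u. chart_height N (w(i := u))) has_real_derivative w i / chart_height N w) (at (w i))"
proof -
  define c where "c = (chart_height N w)\<^sup>2 - (w i)\<^sup>2"
  have upd: "chart_height N (w(i := u)) = sqrt (c + u\<^sup>2)" for u
    unfolding chart_height_def[of N "w(i := u)"] sum_power2_fun_upd[OF i] c_def chart_height_sq
    by (simp add: algebra_simps)
  have pos: "c + (w i)\<^sup>2 > 0" using chart_height_pos[of N w] by (simp add: c_def)
  have "((\<lambda>u. c + u\<^sup>2) has_real_derivative 2 * w i) (at (w i))"
    by (auto intro!: derivative_eq_intros)
  from DERIV_chain'[OF this DERIV_real_sqrt[OF pos]]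
  have "((\<lambda>u. sqrt (c + u\<^sup>2)) has_real_derivative inverse (sqrt (c + (w i)\<^sup>2)) / 2 * (2 * w i)) (at (w i))" .
  then show ?thesis
    using chart_height_pos[of N w] by (simp add: upd c_def field_simps)
qed

definition chart_velocity :: "nat \<Rightarrow> real \<Rightarrow> (nat \<Rightarrow> real) \<Rightarrow> nat \<Rightarrow> nat \<Rightarrow> real" where
  "chart_velocity N \<sigma> w i = (\<lambda>l. if l = i then 1 else if l = N + 1 then \<sigma> * (w i / chart_height N w) else 0)"

lemma curve_deriv_hchart_line:
  assumes i: "i \<in> {1..N}"
  shows "curve_deriv (N+1) (\<lambda>u. hchart N \<sigma> (w(i := u))) (chart_velocity N \<sigma> w i) (w i)"
  unfolding curve_deriv_def
proof
  fix l assume l: "l \<in> {1..N+1}"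
  show "((\<lambda>u. hchart N \<sigma> (w(i := u)) l) has_real_derivative chart_velocity N \<sigma> w i l) (at (w i))"
  proof (cases "l = N + 1")
    case True
    then show ?thesis
      using i DERIV_cmult[OF chart_height_has_derivative[OF i], of \<sigma>] by (simp add: hchart_eq chart_velocity_def)
  next
    case False
    then show ?thesis
      using l i by (cases "l = i") (auto simp: hchart_eq chart_velocity_def)
  qed
qed

lemma sum_chart_velocity:
  fixes D :: "nat \<Rightarrow> complex"
  assumes i: "i \<in> {1..N}"
  shows "(\<Sum>l=1..N+1. D l * of_real (chart_velocity N \<sigma> w i l)) = D i + D (N+1) * of_real (\<sigma> * (w i / chart_height N w))"
proof -
  have "(\<Sum>l=1..N. D l * of_real (chart_velocity N \<sigma> w i l)) = (\<Sum>l=1..N. if l = i then D l else 0)"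
    by (rule sum.cong) (auto simp: chart_velocity_def)
  then show ?thesis using i by (simp add: chart_velocity_def)
qed

text \<open>Identities behind the chart computation: \<open>D\<close> and \<open>Dt\<close> are the first \<open>N\<close> components and the
  last component of an ambient gradient at \<open>hchart N \<sigma> w\<close>, \<open>\<rho> = chart_height N w\<close>, and the hypothesis
  \<open>euler\<close> is Euler's relation there.\<close>

lemma hmetric_inv_tangent_sum:
  fixes D :: "nat \<Rightarrow> complex" and Dt :: complex and w :: "nat \<Rightarrow> real" and \<sigma> \<rho> :: real
  assumes \<rho>: "\<rho>\<^sup>2 = 1 + (\<Sum>j=1..N. (w j)\<^sup>2)" "\<rho> > 0"
    and euler: "(\<Sum>l=1..N. D l * of_real (w l)) + Dt * of_real (\<sigma> * \<rho>) = 0" and i: "i \<in> {1..N}"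
  shows "(\<Sum>j=1..N. of_real ((if i = j then 1 else 0) + w i * w j) * (D j + Dt * of_real (\<sigma> * (w j / \<rho>)))) = D i"
proof -
  have pointwise: "of_real ((if i = j then 1 else 0) + w i * w j) * (D j + Dt * of_real (\<sigma> * (w j / \<rho>))) =
     (if i = j then D j + Dt * of_real (\<sigma> * (w j / \<rho>)) else 0) + of_real (w i) * (D j * of_real (w j))
     + Dt * of_real (\<sigma> * w i / \<rho>) * of_real ((w j)\<^sup>2)" for j
    by (simp add: algebra_simps power2_eq_square)
  have "(\<Sum>j=1..N. of_real ((if i = j then 1 else 0) + w i * w j) * (D j + Dt * of_real (\<sigma> * (w j / \<rho>))))
     = (\<Sum>j=1..N. (if i = j then D j + Dt * of_real (\<sigma> * (w j / \<rho>)) else 0))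
       + of_real (w i) * (\<Sum>j=1..N. D j * of_real (w j)) + Dt * of_real (\<sigma> * w i / \<rho>) * of_real (\<Sum>j=1..N. (w j)\<^sup>2)"
    unfolding pointwise by (simp add: sum.distrib sum_distrib_left)
  also have "(\<Sum>j=1..N. (if i = j then D j + Dt * of_real (\<sigma> * (w j / \<rho>)) else 0))
      = D i + Dt * of_real (\<sigma> * (w i / \<rho>))"
    using i by simp
  also have "(\<Sum>j=1..N. D j * of_real (w j)) = - Dt * of_real (\<sigma> * \<rho>)"
    using euler by (simp add: eq_neg_iff_add_eq_0)
  also have "(\<Sum>j=1..N. (w j)\<^sup>2) = \<rho>\<^sup>2 - 1"
    using \<rho>(1) by simp
  also have "D i + Dt * of_real (\<sigma> * (w i / \<rho>)) + of_real (w i) * (- Dt * of_real (\<sigma> * \<rho>))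
      + Dt * of_real (\<sigma> * w i / \<rho>) * of_real (\<rho>\<^sup>2 - 1) = D i"
    using \<rho>(2) by (simp add: field_simps power2_eq_square)
  finally show ?thesis .
qed

lemma kappa_tangent_sum:
  fixes D :: "nat \<Rightarrow> complex" and Dt :: complex and w :: "nat \<Rightarrow> real" and \<sigma> \<rho> :: real
  assumes \<sigma>: "\<sigma>\<^sup>2 = 1" and \<rho>: "\<rho> > 0"
    and euler: "(\<Sum>l=1..N. D l * of_real (w l)) + Dt * of_real (\<sigma> * \<rho>) = 0"
  shows "(\<Sum>i=1..N. (D i + Dt * of_real (\<sigma> * (w i / \<rho>))) * D i) = - Dt * Dt + (\<Sum>i=1..N. D i * D i)"
proof -
  have "(\<Sum>i=1..N. (D i + Dt * of_real (\<sigma> * (w i / \<rho>))) * D i) =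
      (\<Sum>i=1..N. D i * D i) + Dt * of_real (\<sigma> / \<rho>) * (\<Sum>i=1..N. D i * of_real (w i))"
    by (simp add: sum.distrib sum_distrib_left algebra_simps)
  also have "(\<Sum>i=1..N. D i * of_real (w i)) = - Dt * of_real (\<sigma> * \<rho>)"
    using euler by (simp add: eq_neg_iff_add_eq_0)
  also have "Dt * of_real (\<sigma> / \<rho>) * (- Dt * of_real (\<sigma> * \<rho>)) = - Dt * Dt * of_real (\<sigma>\<^sup>2 * (\<rho> / \<rho>))"
    by (simp add: algebra_simps power2_eq_square)
  finally show ?thesis using \<sigma> \<rho> by simp
qed

lemma tau_tangent_sum:
  fixes D DDd DDt :: "nat \<Rightarrow> complex" and Dt DDtt :: complex and y :: "nat \<Rightarrow> real" and \<sigma> \<rho> :: real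
  assumes \<sigma>: "\<sigma>\<^sup>2 = 1" and \<rho>: "\<rho> > 0"
    and euler: "(\<Sum>l=1..N. D l * of_real (y l)) + Dt * of_real (\<sigma> * \<rho>) = 0"
    and euler': "(\<Sum>l=1..N. DDt l * of_real (y l)) + DDtt * of_real (\<sigma> * \<rho>) = - Dt"
    and trace: "- DDtt + (\<Sum>k=1..N. DDd k) = 0"
  shows "of_real \<rho> * (\<Sum>i=1..N. of_real (- (y i / \<rho>) / \<rho>\<^sup>2) * D i
      + of_real (1 / \<rho>) * (DDd i + DDt i * of_real (\<sigma> * (y i / \<rho>)))) = 0"
proof -
  have pointwise: "of_real \<rho> * (of_real (- (y i / \<rho>) / \<rho>\<^sup>2) * D i + of_real (1 / \<rho>) * (DDd i + DDt i * of_real (\<sigma> * (y i / \<rho>))))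
      = of_real (- 1 / \<rho>\<^sup>2) * (D i * of_real (y i)) + DDd i + of_real (\<sigma> / \<rho>) * (DDt i * of_real (y i))" for i
    using \<rho> by (simp add: field_simps power2_eq_square)
  have "of_real \<rho> * (\<Sum>i=1..N. of_real (- (y i / \<rho>) / \<rho>\<^sup>2) * D i
      + of_real (1 / \<rho>) * (DDd i + DDt i * of_real (\<sigma> * (y i / \<rho>))))
      = (\<Sum>i=1..N. of_real (- 1 / \<rho>\<^sup>2) * (D i * of_real (y i)) + DDd i + of_real (\<sigma> / \<rho>) * (DDt i * of_real (y i)))"
    unfolding sum_distrib_left pointwise ..
  also have "\<dots> = of_real (- 1 / \<rho>\<^sup>2) * (\<Sum>i=1..N. D i * of_real (y i)) + (\<Sum>i=1..N. DDd i)
      + of_real (\<sigma> / \<rho>) * (\<Sum>i=1..N. DDt i * of_real (y i))"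
    by (simp only: sum.distrib sum_distrib_left)
  also have "(\<Sum>i=1..N. D i * of_real (y i)) = - Dt * of_real (\<sigma> * \<rho>)"
    using euler by (simp add: eq_neg_iff_add_eq_0)
  also have "(\<Sum>i=1..N. DDt i * of_real (y i)) = - Dt - DDtt * of_real (\<sigma> * \<rho>)"
    using euler' by (simp add: algebra_simps)
  also have "(\<Sum>i=1..N. DDd i) = DDtt"
    using trace by simp
  also have "of_real (- 1 / \<rho>\<^sup>2) * (- Dt * of_real (\<sigma> * \<rho>)) + DDtt
      + of_real (\<sigma> / \<rho>) * (- Dt - DDtt * of_real (\<sigma> * \<rho>)) = 0"
  proof -
    have "complex_of_real \<sigma> * of_real \<sigma> = 1" using \<sigma> by (metis of_real_1 of_real_mult power2_eq_square)
    then show ?thesis using \<rho> by (simp add: field_simps power2_eq_square)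
  qed
  finally show ?thesis .
qed

locale hyperboloid_chart = degree0_homogeneous "N+1" V F DF DDF for N V F DF DDF +
  fixes \<sigma> :: real
  assumes sheet: "\<sigma>\<^sup>2 = 1"
    and harmonic: "\<And>x. x \<in> V \<Longrightarrow>
      lor_bilin (N+1) (\<lambda>k. DF k x) (\<lambda>k. DF k x) = 0 \<and> lor_trace (N+1) (\<lambda>k j. DDF k j x) = 0"
    and open_along_curves: "\<And>x \<gamma> \<gamma>' t. x \<in> V \<Longrightarrow> curve_deriv (N+1) \<gamma> \<gamma>' t \<Longrightarrow> \<gamma> t = x \<Longrightarrow>
      \<forall>s. supp_in (N+1) (\<gamma> s) \<Longrightarrow> eventually (\<lambda>s. \<gamma> s \<in> V) (nhds t)"
begin

definition chart_partial :: "nat \<Rightarrow> (nat \<Rightarrow> real) \<Rightarrow> complex" where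
  "chart_partial i w = DF i (hchart N \<sigma> w) + DF (N+1) (hchart N \<sigma> w) * of_real (\<sigma> * (w i / chart_height N w))"

lemma has_curve_gradient_along_chart_line:
  assumes i: "i \<in> {1..N}" and G: "has_curve_gradient (N+1) G D (hchart N \<sigma> w)"
  shows "((\<lambda>u. G (hchart N \<sigma> (w(i := u)))) has_vector_derivative
    D i + D (N+1) * of_real (\<sigma> * (w i / chart_height N w))) (at (w i))"
proof -
  have "((\<lambda>u. G (hchart N \<sigma> (w(i := u)))) has_vector_derivative
      (\<Sum>l=1..N+1. D l * of_real (chart_velocity N \<sigma> w i l))) (at (w i))"
    using G[unfolded has_curve_gradient_def, rule_format, OF curve_deriv_hchart_line[OF i]] by simp
  then show ?thesis by (simp only: sum_chart_velocity[OF i])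
qed

lemma chart_partial_has_derivative:
  assumes X: "hchart N \<sigma> w \<in> V" and i: "i \<in> {1..N}"
  shows "((\<lambda>u. (F \<circ> hchart N \<sigma>) (w(i := u))) has_vector_derivative chart_partial i w) (at (w i))"
proof -
  have "has_curve_gradient (N+1) F (\<lambda>k. DF k (hchart N \<sigma> w)) (hchart N \<sigma> w)"
    using hessian X by (simp add: has_hessian_on_def)
  from has_curve_gradient_along_chart_line[OF i this] show ?thesis
    by (simp add: chart_partial_def o_def)
qed

lemma pd_chart: "hchart N \<sigma> w \<in> V \<Longrightarrow> i \<in> {1..N} \<Longrightarrow> pd i (F \<circ> hchart N \<sigma>) w = chart_partial i w"
  unfolding pd_def by (rule vector_derivative_at, rule chart_partial_has_derivative)

lemma eventually_chart_line_in:
  assumes X: "hchart N \<sigma> y \<in> V" and i: "i \<in> {1..N}"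
  shows "eventually (\<lambda>u. hchart N \<sigma> (y(i := u)) \<in> V) (nhds (y i))"
  by (rule open_along_curves[OF X curve_deriv_hchart_line[OF i]]) (auto simp: supp_in_def hchart_def)

lemma hchart_coord: "l \<in> {1..N} \<Longrightarrow> hchart N \<sigma> w l = w l"
  by (simp add: hchart_def)

lemma hchart_last: "hchart N \<sigma> w (Suc N) = \<sigma> * chart_height N w"
  by (simp add: hchart_eq)

lemma euler_gradient_chart:
  assumes X: "hchart N \<sigma> w \<in> V"
  shows "(\<Sum>l=1..N. DF l (hchart N \<sigma> w) * of_real (w l)) + DF (N+1) (hchart N \<sigma> w) * of_real (\<sigma> * chart_height N w) = 0"
proof -
  have "(\<Sum>l=1..N. DF l (hchart N \<sigma> w) * of_real (hchart N \<sigma> w l)) = (\<Sum>l=1..N. DF l (hchart N \<sigma> w) * of_real (w l))"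
    by (rule sum.cong) (auto simp: hchart_coord)
  then show ?thesis
    using euler_gradient[OF X] by (simp add: hchart_last)
qed

lemma euler_hessian_chart:
  assumes X: "hchart N \<sigma> w \<in> V"
  shows "(\<Sum>l=1..N. DDF l (N+1) (hchart N \<sigma> w) * of_real (w l))
    + DDF (N+1) (N+1) (hchart N \<sigma> w) * of_real (\<sigma> * chart_height N w) = - DF (N+1) (hchart N \<sigma> w)"
proof -
  have "(\<Sum>l=1..N. DDF (N+1) l (hchart N \<sigma> w) * of_real (hchart N \<sigma> w l))
      = (\<Sum>l=1..N. DDF l (N+1) (hchart N \<sigma> w) * of_real (w l))"
    using hessian X by (intro sum.cong) (auto simp: hchart_coord has_hessian_on_def)
  then show ?thesis
    using euler_hessian[OF X, of "N+1"] by (simp add: hchart_last)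
qed

lemma hmetric_inv_chart_partial:
  assumes X: "hchart N \<sigma> w \<in> V" and i: "i \<in> {1..N}"
  shows "(\<Sum>j=1..N. of_real (hmetric_inv N w i j) * chart_partial j w) = DF i (hchart N \<sigma> w)"
  unfolding hmetric_inv_def chart_partial_def
  by (rule hmetric_inv_tangent_sum[OF chart_height_sq chart_height_pos euler_gradient_chart[OF X] i])

lemma chart_partial_differentiable:
  assumes X: "hchart N \<sigma> y \<in> V" and k: "k \<in> {1..N}" and j: "j \<in> {1..N}"
  shows "(\<lambda>u. chart_partial k (y(j := u))) differentiable (at (y j))"
proof -
  have "has_curve_gradient (N+1) (DF l) (\<lambda>l'. DDF l l' (hchart N \<sigma> y)) (hchart N \<sigma> y)" for l
    using hessian X unfolding has_hessian_on_def by blast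
  note DF_line = has_curve_gradient_along_chart_line[OF j this]
  have k_line: "((\<lambda>u. (y(j := u)) k) has_real_derivative (if k = j then 1 else 0)) (at (y j))"
    by (cases "k = j") auto
  have nz: "chart_height N (y(j := y j)) \<noteq> 0"
    using chart_height_pos[of N "y(j := y j)"] by simp
  note slope = has_vector_derivative_of_real[OF
      DERIV_cmult[OF DERIV_divide[OF k_line chart_height_has_derivative[OF j] nz], of \<sigma>]]
  show ?thesis
    unfolding chart_partial_def
    by (rule differentiableI_vector has_vector_derivative_add[OF DF_line has_vector_derivative_mult[OF DF_line slope]])+
qed

lemma twice_pd_chart:
  assumes X: "hchart N \<sigma> y \<in> V"
  shows "twice_pd N (F \<circ> hchart N \<sigma>) y"
  unfolding twice_pd_def has_pd_def
proof (intro ballI conjI)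
  fix k j assume k: "k \<in> {1..N}" and j: "j \<in> {1..N}"
  show "(\<lambda>u. (F \<circ> hchart N \<sigma>) (y(k := u))) differentiable at (y k)"
    by (rule differentiableI_vector[OF chart_partial_has_derivative[OF X k]])
  have "eventually (\<lambda>u. chart_partial k (y(j := u)) = pd k (F \<circ> hchart N \<sigma>) (y(j := u))) (nhds (y j))"
    using eventually_chart_line_in[OF X j] by (rule eventually_mono) (rule pd_chart[symmetric, OF _ k])
  then show "(\<lambda>u. pd k (F \<circ> hchart N \<sigma>) (y(j := u))) differentiable at (y j)"
    using chart_partial_differentiable[OF X k j]
    by (metis differentiableI_vector has_vector_derivative_transform_eventually vector_derivative_works)
qed

lemma hsqrtdet_hmetric_inv_pd_chart:
  assumes X: "hchart N \<sigma> w \<in> V" and i: "i \<in> {1..N}"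
  shows "of_real (hsqrtdet N w) * (\<Sum>j=1..N. of_real (hmetric_inv N w i j) * pd j (F \<circ> hchart N \<sigma>) w)
    = of_real (1 / chart_height N w) * DF i (hchart N \<sigma> w)"
proof -
  have "(\<Sum>j=1..N. of_real (hmetric_inv N w i j) * pd j (F \<circ> hchart N \<sigma>) w)
      = (\<Sum>j=1..N. of_real (hmetric_inv N w i j) * chart_partial j w)"
    by (rule sum.cong) (auto simp: pd_chart[OF X])
  then show ?thesis using hmetric_inv_chart_partial[OF X i] by (simp add: hsqrtdet_eq)
qed

lemma pd_hsqrtdet_hmetric_inv_pd_chart:
  assumes X: "hchart N \<sigma> y \<in> V" and i: "i \<in> {1..N}"
  shows "pd i (\<lambda>w. of_real (hsqrtdet N w) * (\<Sum>j=1..N. of_real (hmetric_inv N w i j) * pd j (F \<circ> hchart N \<sigma>) w)) y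
    = of_real (- (y i / chart_height N y) / (chart_height N y)\<^sup>2) * DF i (hchart N \<sigma> y)
      + of_real (1 / chart_height N y) * (DDF i i (hchart N \<sigma> y)
        + DDF i (N+1) (hchart N \<sigma> y) * of_real (\<sigma> * (y i / chart_height N y)))"
proof -
  have "has_curve_gradient (N+1) (DF i) (\<lambda>l. DDF i l (hchart N \<sigma> y)) (hchart N \<sigma> y)"
    using hessian X unfolding has_hessian_on_def by blast
  note DF_line = has_curve_gradient_along_chart_line[OF i this]
  have nz: "chart_height N (y(i := y i)) \<noteq> 0"
    using chart_height_pos[of N "y(i := y i)"] by simp
  have "((\<lambda>u. 1 / chart_height N (y(i := u))) has_real_derivative
      (0 * chart_height N (y(i := y i)) - 1 * (y i / chart_height N y)) / (chart_height N (y(i := y i)) * chart_height N (y(i := y i))))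
      (at (y i))"
    by (rule DERIV_divide[OF DERIV_const chart_height_has_derivative[OF i] nz])
  then have "((\<lambda>u. 1 / chart_height N (y(i := u))) has_real_derivative
      - (y i / chart_height N y) / (chart_height N y)\<^sup>2) (at (y i))"
    by (simp add: power2_eq_square)
  from has_vector_derivative_mult[OF has_vector_derivative_of_real[OF this] DF_line]
  have "((\<lambda>u. of_real (1 / chart_height N (y(i := u))) * DF i (hchart N \<sigma> (y(i := u)))) has_vector_derivative
      of_real (- (y i / chart_height N y) / (chart_height N y)\<^sup>2) * DF i (hchart N \<sigma> y)
      + of_real (1 / chart_height N y) * (DDF i i (hchart N \<sigma> y)
        + DDF i (N+1) (hchart N \<sigma> y) * of_real (\<sigma> * (y i / chart_height N y)))) (at (y i))"
    by (simp add: add.commute)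
  moreover have "eventually (\<lambda>u. of_real (1 / chart_height N (y(i := u))) * DF i (hchart N \<sigma> (y(i := u)))
      = of_real (hsqrtdet N (y(i := u))) * (\<Sum>j=1..N. of_real (hmetric_inv N (y(i := u)) i j)
          * pd j (F \<circ> hchart N \<sigma>) (y(i := u)))) (nhds (y i))"
    using eventually_chart_line_in[OF X i]
    by (rule eventually_mono) (rule hsqrtdet_hmetric_inv_pd_chart[symmetric, OF _ i])
  ultimately show ?thesis
    unfolding pd_def by (intro vector_derivative_at) (simp add: has_vector_derivative_transform_eventually)
qed

lemma tauH_chart:
  assumes X: "hchart N \<sigma> y \<in> V"
  shows "tauH N (F \<circ> hchart N \<sigma>) y = 0"
proof -
  let ?X = "hchart N \<sigma> y" and ?\<rho> = "chart_height N y"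
  have "tauH N (F \<circ> hchart N \<sigma>) y = of_real ?\<rho> * (\<Sum>i=1..N. of_real (- (y i / ?\<rho>) / ?\<rho>\<^sup>2) * DF i ?X
      + of_real (1 / ?\<rho>) * (DDF i i ?X + DDF i (N+1) ?X * of_real (\<sigma> * (y i / ?\<rho>))))"
    unfolding tauH_def using pd_hsqrtdet_hmetric_inv_pd_chart[OF X] by (simp add: hsqrtdet_eq)
  also have "\<dots> = 0"
  proof (rule tau_tangent_sum[OF sheet chart_height_pos euler_gradient_chart[OF X] euler_hessian_chart[OF X]])
    show "- DDF (N+1) (N+1) ?X + (\<Sum>k=1..N. DDF k k ?X) = 0"
      using harmonic[OF X] by (simp add: lor_trace_def)
  qed
  finally show ?thesis .
qed

lemma kappaH_chart:
  assumes X: "hchart N \<sigma> y \<in> V"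
  shows "kappaH N (F \<circ> hchart N \<sigma>) (F \<circ> hchart N \<sigma>) y = 0"
proof -
  let ?X = "hchart N \<sigma> y" and ?h = "F \<circ> hchart N \<sigma>"
  have "kappaH N ?h ?h y = (\<Sum>i=1..N. pd i ?h y * (\<Sum>j=1..N. of_real (hmetric_inv N y i j) * pd j ?h y))"
    unfolding kappaH_def by (simp add: sum_distrib_left mult_ac)
  also have "\<dots> = (\<Sum>i=1..N. chart_partial i y * DF i ?X)"
  proof (rule sum.cong)
    fix i assume i: "i \<in> {1..N}"
    have "(\<Sum>j=1..N. of_real (hmetric_inv N y i j) * pd j ?h y) = (\<Sum>j=1..N. of_real (hmetric_inv N y i j) * chart_partial j y)"
      by (rule sum.cong) (auto simp: pd_chart[OF X])
    then show "pd i ?h y * (\<Sum>j=1..N. of_real (hmetric_inv N y i j) * pd j ?h y) = chart_partial i y * DF i ?X"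
      using hmetric_inv_chart_partial[OF X i] pd_chart[OF X i] by simp
  qed simp
  also have "\<dots> = - DF (N+1) ?X * DF (N+1) ?X + (\<Sum>i=1..N. DF i ?X * DF i ?X)"
    unfolding chart_partial_def by (rule kappa_tangent_sum[OF sheet chart_height_pos euler_gradient_chart[OF X]])
  also have "\<dots> = 0"
    using harmonic[OF X] by (simp add: lor_bilin_def)
  finally show ?thesis .
qed

end

lemma harmonic_morphism_H_if_degree0_homogeneous:
  assumes hm: "harmonic_morphism_on (N+1) V F DF DDF"
    and cone: "\<And>x c. x \<in> V \<Longrightarrow> c > 0 \<Longrightarrow> dilate c x \<in> V"
    and invariant: "\<And>x c. c > 0 \<Longrightarrow> F (dilate c x) = F x"
    and open_along_curves: "\<And>x \<gamma> \<gamma>' t. x \<in> V \<Longrightarrow> curve_deriv (N+1) \<gamma> \<gamma>' t \<Longrightarrow> \<gamma> t = x \<Longrightarrow>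
      \<forall>s. supp_in (N+1) (\<gamma> s) \<Longrightarrow> eventually (\<lambda>s. \<gamma> s \<in> V) (nhds t)"
    and W: "W \<subseteq> V"
  shows "harmonic_morphism_H N W F"
  unfolding harmonic_morphism_H_def
proof (intro ballI allI impI)
  fix \<sigma> :: real and y assume \<sigma>: "\<sigma> \<in> {1, -1}" and y: "supp_in N y \<and> hchart N \<sigma> y \<in> W"
  interpret hyperboloid_chart N V F DF DDF \<sigma>
    using hm cone invariant open_along_curves \<sigma>
    by unfold_locales (auto simp: harmonic_morphism_on_def)
  have "hchart N \<sigma> y \<in> V" using y W by blast
  then show "twice_pd N (F \<circ> hchart N \<sigma>) y \<and> tauH N (F \<circ> hchart N \<sigma>) y = 0 \<and>
      kappaH N (F \<circ> hchart N \<sigma>) (F \<circ> hchart N \<sigma>) y = 0"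
    using twice_pd_chart tauH_chart kappaH_chart by blast
qed

lemma zmap_last_nonzero:
  assumes n: "n \<ge> 1" and x: "x \<in> Uset (2*n+3)"
  shows "zmap n x n \<noteq> 0"
proof -
  have "x (2*n+2) * x (2*n+2) \<le> (\<Sum>k=1..2*n+2. x k * x k)"
    by (rule member_le_sum) auto
  then have "x (2*n+2) * x (2*n+2) < x (2*n+3) * x (2*n+3)"
    using x by (simp add: Uset_def lor_def)
  then have "x (2*n+2) \<noteq> x (2*n+3)" by auto
  then show ?thesis using n by (simp add: zmap_def)
qed

lemma pistar_Hset: "y \<in> Hset m \<Longrightarrow> pistar m y = y"
  by (simp add: Hset_def pistar_def)

lemma Vset_eq_Uset_if_zn_power:
  assumes n: "n \<ge> 1" and d: "even d" and Q: "\<forall>z. hpoly n d cQ z = z n ^ d"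
  shows "(\<forall>x\<in>Uset (2*n+3). hpoly n d cQ (zmap n x) \<noteq> 0) \<and> Vset n d a cQ = Uset (2*n+3)
    \<and> pistar (2*n+3) ` Vset n d a cQ = Hset (2*n+3)"
proof (intro conjI)
  show Q_nonzero: "\<forall>x\<in>Uset (2*n+3). hpoly n d cQ (zmap n x) \<noteq> 0"
    using Q zmap_last_nonzero[OF n] by simp
  then show V: "Vset n d a cQ = Uset (2*n+3)"
    using d by (auto simp: Vset_def)
  have "Hset (2*n+3) \<subseteq> Vset n d a cQ"
    unfolding V by (auto simp: Hset_def Uset_def)
  then have "Hset (2*n+3) \<subseteq> pistar (2*n+3) ` Vset n d a cQ"
    using pistar_Hset by (metis image_eqI subsetD subsetI)
  moreover have "pistar (2*n+3) ` Vset n d a cQ \<subseteq> Hset (2*n+3)"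
    using pistar_Vset by blast
  ultimately show "pistar (2*n+3) ` Vset n d a cQ = Hset (2*n+3)" by blast
qed

text \<open>The hypotheses \<open>d \<ge> 1\<close> and the linear independence of \<open>P\<^sub>d\<close> and \<open>Q\<^sub>d\<close> only ensure that
  \<open>\<Phi>\<close> is non-constant; the proof does not use them.\<close>
theorem mainTheorem4:
  fixes n d :: nat and a :: "nat \<Rightarrow> nat \<Rightarrow> complex"
    and cP cQ :: "(nat \<Rightarrow> nat) \<Rightarrow> complex"
  assumes "n \<ge> 1" and "d \<ge> 1"
    and "\<forall>x. tauE 3 (quad3 a) x = 0"
    and "\<forall>x. kappaE 3 (quad3 a) (quad3 a) x = 0"
    and "\<forall>u v. (\<forall>z. u * hpoly n d cP z + v * hpoly n d cQ z = 0) \<longrightarrow> u = 0 \<and> v = 0"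
  shows "harmonic_morphism_L (2*n+3) (Vset n d a cQ) (PhiHat n d a cP cQ)
    \<and> (\<forall>x\<in>Vset n d a cQ. \<forall>c::real. c > 0 \<longrightarrow>
          (\<lambda>k. c * x k) \<in> Vset n d a cQ \<and> PhiHat n d a cP cQ (\<lambda>k. c * x k) = PhiHat n d a cP cQ x)
    \<and> (\<forall>x\<in>Vset n d a cQ. pistar (2*n+3) x \<in> Vset n d a cQ \<inter> Hset (2*n+3)
          \<and> PhiHat n d a cP cQ (pistar (2*n+3) x) = PhiHat n d a cP cQ x)
    \<and> harmonic_morphism_H (2*n+2) (pistar (2*n+3) ` Vset n d a cQ) (PhiHat n d a cP cQ)
    \<and> (even d \<and> (\<forall>z. hpoly n d cQ z = z n ^ d) \<longrightarrow>
          (\<forall>x\<in>Uset (2*n+3). hpoly n d cQ (zmap n x) \<noteq> 0)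
          \<and> Vset n d a cQ = Uset (2*n+3)
          \<and> pistar (2*n+3) ` Vset n d a cQ = Hset (2*n+3))"
proof -
  note n = assms(1)
  let ?V = "Vset n d a cQ" and ?F = "PhiHat n d a cP cQ"
  obtain DF DDF where hm: "harmonic_morphism_on (2*n+3) ?V ?F DF DDF"
    using harmonic_morphism_on_PhiHat[OF n assms(3,4)] by blast
  have "harmonic_morphism_L (2*n+3) ?V ?F"
    using hm eventually_line_in_Vset[OF n] by (intro harmonic_morphism_L_if_harmonic_morphism_on) auto
  moreover have "harmonic_morphism_H (2*n+2) (pistar (2*n+3) ` ?V) ?F"
  proof -
    have W: "pistar (2*n+3) ` ?V \<subseteq> ?V" using pistar_Vset by blast
    have m: "2*n+3 = (2*n+2) + 1" by simp
    show ?thesis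
      using hm W Vset_dilate PhiHat_dilate eventually_curve_in_Vset[OF n] unfolding m
      by (intro harmonic_morphism_H_if_degree0_homogeneous[where V = ?V]) auto
  qed
  ultimately show ?thesis
    using Vset_dilate[of _ _ n d a cQ] PhiHat_dilate[of _ n d a cP cQ] pistar_Vset[of _ n d a cQ cP]
      Vset_eq_Uset_if_zn_power[OF n, of d cQ a]
    unfolding dilate_def by blast
qed

end
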